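(* Let $n\ge1$, $K\ge0$, and let $t,q$ be generic. The functions $L(\mathbf{u};\mathbf{v})=\sum_{|\mathbf{k}|=K}X_{\mathbf{k}}(\mathbf{u};\mathbf{v})$ and $R(\mathbf{u};\mathbf{v})=\sum_{|\mathbf{k}|=K}Y_{\mathbf{k}}(\mathbf{u};\mathbf{v})$ (sums over $\mathbf{k}\in\mathbb{Z}_{\ge0}^n$ with $k_1+\dots+k_n=K$) have no poles along the hypersurfaces $u_i=q^pu_j$ and $v_a=q^pv_b$ for $i\ne j$, $a\ne b$, $p\in\mathbb{Z}$.
   Context: Fix square roots of the complex variables $u_i,v_a,t,q$ and interpret $z^{1/2}$ for monomials $z$ in these variables multiplicatively. For an integer $m\ge0$, $[z;q]_m=\prod_{l=0}^{m-1}(q^{l/2}z^{1/2}-q^{-l/2}z^{-1/2})$. For $\mathbf{k}\in\mathbb{Z}_{\ge0}^n$, $\mathbf{u}=(u_1,\dots,u_n)$, $\mathbf{v}=(v_1,\dots,v_n)$: $X_{\mathbf{k}}(\mathbf{u};\mathbf{v})=\prod_{i=1}^n\frac{[qt;q]_{k_i}}{[q;q]_{k_i}}\prod_{i\ne j}\frac{[t^{-1}q^{-k_j}u_i/u_j;q]_{k_i}}{[q^{-k_j}u_i/u_j;q]_{k_i}}\prod_{a,j=1}^n\frac{[tu_j/v_a;q]_{k_j}}{[u_j/v_a;q]_{k_j}}$, $Y_{\mathbf{k}}(\mathbf{u};\mathbf{v})=\prod_{a=1}^n\frac{[qt;q]_{k_a}}{[q;q]_{k_a}}\prod_{a\ne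 b}\frac{[t^{-1}q^{-k_a}v_a/v_b;q]_{k_b}}{[q^{-k_a}v_a/v_b;q]_{k_b}}\prod_{a,j=1}^n\frac{[tu_j/v_a;q]_{k_a}}{[u_j/v_a;q]_{k_a}}$. *)

theory Defs
  imports "HOL-Analysis.Analysis"
begin

(* Everything is expressed in the fixed square roots:
   U$i = u_i^(1/2), V$a = v_a^(1/2), T = t^(1/2), Q = q^(1/2).
   For a monomial z with chosen square root w = z^(1/2),
   [z;q]_m = prod_{l<m} (q^(l/2) z^(1/2) - q^(-l/2) z^(-1/2))
           = prod_{l<m} (Q^l w - (Q^l w)^(-1)). *)
definition qbr :: "complex \<Rightarrow> complex \<Rightarrow> nat \<Rightarrow> complex" where
  "qbr w Q m = (\<Prod>l<m. Q ^ l * w - inverse (Q ^ l * w))"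

definition Xk :: "complex \<Rightarrow> complex \<Rightarrow> ('n::finite \<Rightarrow> nat) \<Rightarrow> complex^'n \<Rightarrow> complex^'n \<Rightarrow> complex" where
  "Xk T Q k U V =
     (\<Prod>i\<in>UNIV. qbr (Q * T) Q (k i) / qbr Q Q (k i)) *
     (\<Prod>i\<in>UNIV. \<Prod>j\<in>UNIV - {i}.
        qbr (inverse T * inverse (Q ^ k j) * U$i / U$j) Q (k i) /
        qbr (inverse (Q ^ k j) * U$i / U$j) Q (k i)) *
     (\<Prod>a\<in>UNIV. \<Prod>j\<in>UNIV.
        qbr (T * U$j / V$a) Q (k j) / qbr (U$j / V$a) Q (k j))"

definition Yk :: "complex \<Rightarrow> complex \<Rightarrow> ('n::finite \<Rightarrow> nat) \<Rightarrow> complex^'n \<Rightarrow> complex^'n \<Rightarrow> complex" where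
  "Yk T Q k U V =
     (\<Prod>a\<in>UNIV. qbr (Q * T) Q (k a) / qbr Q Q (k a)) *
     (\<Prod>a\<in>UNIV. \<Prod>b\<in>UNIV - {a}.
        qbr (inverse T * inverse (Q ^ k a) * V$a / V$b) Q (k b) /
        qbr (inverse (Q ^ k a) * V$a / V$b) Q (k b)) *
     (\<Prod>a\<in>UNIV. \<Prod>j\<in>UNIV.
        qbr (T * U$j / V$a) Q (k a) / qbr (U$j / V$a) Q (k a))"

definition Lsum :: "complex \<Rightarrow> complex \<Rightarrow> nat \<Rightarrow> complex^'n::finite \<Rightarrow> complex^'n \<Rightarrow> complex" where
  "Lsum T Q K U V = (\<Sum>k\<in>{k::'n \<Rightarrow> nat. sum k UNIV = K}. Xk T Q k U V)"

definition Rsum :: "complex \<Rightarrow> complex \<Rightarrow> nat \<Rightarrow> complex^'n::finite \<Rightarrow> complex^'n \<Rightarrow> complex" where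
  "Rsum T Q K U V = (\<Sum>k\<in>{k::'n \<Rightarrow> nat. sum k UNIV = K}. Yk T Q k U V)"

definition generic_pt :: "complex \<Rightarrow> ((complex^'n::finite) \<times> (complex^'n)) set" where
  "generic_pt Q = {(U, V).
     (\<forall>i. U$i \<noteq> 0) \<and> (\<forall>a. V$a \<noteq> 0) \<and>
     (\<forall>i j (p::int). i \<noteq> j \<longrightarrow> (U$i)^2 \<noteq> (Q^2) powi p * (U$j)^2) \<and>
     (\<forall>a b (p::int). a \<noteq> b \<longrightarrow> (V$a)^2 \<noteq> (Q^2) powi p * (V$b)^2) \<and>
     (\<forall>j a (p::int). (U$j)^2 \<noteq> (Q^2) powi p * (V$a)^2)}"

definition generic_on_uu :: "complex \<Rightarrow> 'n::finite \<Rightarrow> 'n \<Rightarrow> int \<Rightarrow> ((complex^'n) \<times> (complex^'n)) set" where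
  "generic_on_uu Q i0 j0 p0 = {(U, V).
     (\<forall>i. U$i \<noteq> 0) \<and> (\<forall>a. V$a \<noteq> 0) \<and>
     (U$i0)^2 = (Q^2) powi p0 * (U$j0)^2 \<and>
     (\<forall>i j (p::int). i \<noteq> j \<and> {i, j} \<noteq> {i0, j0} \<longrightarrow> (U$i)^2 \<noteq> (Q^2) powi p * (U$j)^2) \<and>
     (\<forall>a b (p::int). a \<noteq> b \<longrightarrow> (V$a)^2 \<noteq> (Q^2) powi p * (V$b)^2) \<and>
     (\<forall>j a (p::int). (U$j)^2 \<noteq> (Q^2) powi p * (V$a)^2)}"

definition generic_on_vv :: "complex \<Rightarrow> 'n::finite \<Rightarrow> 'n \<Rightarrow> int \<Rightarrow> ((complex^'n) \<times> (complex^'n)) set" where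
  "generic_on_vv Q a0 b0 p0 = {(U, V).
     (\<forall>i. U$i \<noteq> 0) \<and> (\<forall>a. V$a \<noteq> 0) \<and>
     (V$a0)^2 = (Q^2) powi p0 * (V$b0)^2 \<and>
     (\<forall>i j (p::int). i \<noteq> j \<longrightarrow> (U$i)^2 \<noteq> (Q^2) powi p * (U$j)^2) \<and>
     (\<forall>a b (p::int). a \<noteq> b \<and> {a, b} \<noteq> {a0, b0} \<longrightarrow> (V$a)^2 \<noteq> (Q^2) powi p * (V$b)^2) \<and>
     (\<forall>j a (p::int). (U$j)^2 \<noteq> (Q^2) powi p * (V$a)^2)}"

end

theory Submission
  imports Defs "HOL-Library.Multiset"
begin

(* With skew w = w - 1/w, [z;q]_m is the product of the skew (q^(l/2) z^(1/2)) for l < m, and X_k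
   is a product of ratios [t^(+-1) z;q]_m / [z;q]_m. At a generic point of u_i = +-q^p u_j only
   the two ratios pairing u_i with u_j can have a vanishing denominator, and then through exactly
   one factor, so X_k has at most a simple pole. The k for which this happens are permuted by
   the involution (k_i, k_j) -> (k_j - p, k_i + p), which preserves |k|. On the hypersurface the
   other factors of X_k are invariant under it, and with the vanishing factor removed the pair
   factors of k and of its partner agree, since their factors run through the same multisets of
   exponents. So the residues cancel and X_k + X_k' extends continuously; this is made precise
   by tracking functions whose difference across the hypersurface factors through
   u_i - (+-q^p) u_j. All other terms of L are continuous there, and R as well as the
   hypersurfaces v_a = q^p v_b reduce to this case through Y_k(u;v) = X_k(1/v;1/u). *)

lemma prod_remove2:
  assumes "finite A" and "i \<in> A" and "j \<in> A" and "i \<noteq> j"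
  shows "prod f A = f i * f j * prod f (A - {i, j})"
proof -
  have "insert i (insert j (A - {i, j})) = A" using assms by auto
  moreover have "prod f (insert i (insert j (A - {i, j}))) = f i * (f j * prod f (A - {i, j}))"
    using assms by simp
  ultimately show ?thesis by (simp add: mult.assoc)
qed

lemma sum_remove2:
  assumes "finite A" and "i \<in> A" and "j \<in> A" and "i \<noteq> j"
  shows "sum f A = f i + f j + sum f (A - {i, j})"
proof -
  have "insert i (insert j (A - {i, j})) = A" using assms by auto
  moreover have "sum f (insert i (insert j (A - {i, j}))) = f i + (f j + sum f (A - {i, j}))"
    using assms by simp
  ultimately show ?thesis by (simp add: add.assoc)
qed

lemma prod_offdiag_split_pair:
  fixes g :: "'n::finite \<Rightarrow> 'n \<Rightarrow> 'a::comm_monoid_mult"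
  assumes ij: "i \<noteq> j"
  defines "rest \<equiv> UNIV - {i, j}"
  shows "(\<Prod>m\<in>UNIV. \<Prod>m'\<in>UNIV - {m}. g m m') =
    g i j * g j i * (\<Prod>m\<in>rest. g i m * g j m * g m i * g m j) * (\<Prod>m\<in>rest. \<Prod>m'\<in>rest - {m}. g m m')"
proof -
  have split_row: "prod f (UNIV - {m}) = f i * f j * prod f (rest - {m})" if "m \<in> rest" for f :: "'n \<Rightarrow> 'a" and m
  proof -
    have "UNIV - {m} - {i, j} = rest - {m}" by (auto simp: rest_def)
    then show ?thesis using prod_remove2[of "UNIV - {m}" i j f] that ij by (auto simp: rest_def)
  qed
  have split_i: "prod f (UNIV - {i}) = f j * prod f rest" and split_j: "prod f (UNIV - {j}) = f i * prod f rest"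
    for f :: "'n \<Rightarrow> 'a"
  proof -
    have "UNIV - {i} - {j} = rest" and "UNIV - {j} - {i} = rest" by (auto simp: rest_def)
    then show "prod f (UNIV - {i}) = f j * prod f rest" and "prod f (UNIV - {j}) = f i * prod f rest"
      using prod.remove[of "UNIV - {i}" j f] prod.remove[of "UNIV - {j}" i f] ij by auto
  qed
  have "(\<Prod>m\<in>UNIV. \<Prod>m'\<in>UNIV - {m}. g m m') =
      (\<Prod>m'\<in>UNIV - {i}. g i m') * (\<Prod>m'\<in>UNIV - {j}. g j m') * (\<Prod>m\<in>rest. \<Prod>m'\<in>UNIV - {m}. g m m')"
    unfolding rest_def using ij by (simp add: prod_remove2)
  also have "\<dots> = g i j * (\<Prod>m\<in>rest. g i m) * (g j i * (\<Prod>m\<in>rest. g j m)) *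
      (\<Prod>m\<in>rest. g m i * g m j * (\<Prod>m'\<in>rest - {m}. g m m'))"
    unfolding split_i split_j by (intro arg_cong2[where f = "(*)"] refl prod.cong split_row)
  also have "\<dots> = g i j * g j i * (\<Prod>m\<in>rest. g i m * g j m * g m i * g m j) * (\<Prod>m\<in>rest. \<Prod>m'\<in>rest - {m}. g m m')"
    by (simp only: prod.distrib ac_simps)
  finally show ?thesis .
qed

lemma count_image_uminus: "count (image_mset uminus (M :: int multiset)) r = count M (- r)"
proof (induction M)
  case (add x M)
  then show ?case by (cases "x = - r") auto
qed simp

lemma count_image_abs:
  "count (image_mset abs (M :: int multiset)) r =
     (if r < 0 then 0 else if r = 0 then count M 0 else count M r + count M (- r))"
proof (induction M)
  case (add x M)
  then show ?case by (cases "r < 0"; cases "r = 0"; cases "x = r"; cases "x = - r") (auto simp: abs_if)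
qed simp

lemma prod_mset_odd:
  fixes f :: "int \<Rightarrow> 'a::comm_ring_1"
  assumes odd: "\<And>r. f (- r) = - f r"
  shows "(\<Prod>r\<in>#M. f r) = (-1) ^ size (filter_mset (\<lambda>r. r < 0) M) * (\<Prod>r\<in>#image_mset abs M. f r)"
proof (induction M)
  case (add x M)
  show ?case
  proof (cases "x < 0")
    case True
    then have "f x = - f \<bar>x\<bar>" using odd[of "\<bar>x\<bar>"] by simp
    then show ?thesis using add True by simp
  qed (use add in simp)
qed simp

lemma tendsto_sum_involution:
  fixes f :: "'k \<Rightarrow> 'a \<Rightarrow> 'b::real_normed_vector"
  assumes A: "finite A" and P: "P \<subseteq> A" and \<sigma>: "\<And>k. k \<in> P \<Longrightarrow> \<sigma> k \<in> P \<and> \<sigma> (\<sigma> k) = k"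
    and single: "\<And>k. k \<in> A - P \<Longrightarrow> \<exists>l. (f k \<longlongrightarrow> l) F"
    and pair: "\<And>k. k \<in> P \<Longrightarrow> \<exists>l. ((\<lambda>z. f k z + f (\<sigma> k) z) \<longlongrightarrow> l) F"
  shows "\<exists>l. ((\<lambda>z. \<Sum>k\<in>A. f k z) \<longlongrightarrow> l) F"
proof -
  have bij: "bij_betw \<sigma> P P"
    by (rule bij_betw_byWitness[where f' = \<sigma>]) (use \<sigma> in auto)
  have split: "(\<Sum>k\<in>A. f k z) = (\<Sum>k\<in>A - P. f k z) + (1/2) *\<^sub>R (\<Sum>k\<in>P. f k z + f (\<sigma> k) z)" for z
    using sum.subset_diff[OF P A, of "\<lambda>k. f k z"] sum.reindex_bij_betw[OF bij, of "\<lambda>k. f k z"]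
    by (simp add: sum.distrib)
  obtain L1 where "\<And>k. k \<in> A - P \<Longrightarrow> (f k \<longlongrightarrow> L1 k) F" using single by metis
  moreover obtain L2 where "\<And>k. k \<in> P \<Longrightarrow> ((\<lambda>z. f k z + f (\<sigma> k) z) \<longlongrightarrow> L2 k) F" using pair by metis
  ultimately have "((\<lambda>z. (\<Sum>k\<in>A - P. f k z) + (1/2) *\<^sub>R (\<Sum>k\<in>P. f k z + f (\<sigma> k) z)) \<longlongrightarrow>
      (\<Sum>k\<in>A - P. L1 k) + (1/2) *\<^sub>R (\<Sum>k\<in>P. L2 k)) F"
    by (intro tendsto_intros) auto
  then show ?thesis unfolding split by blast
qed

lemma finite_weak_compositions: "finite {k :: 'n::finite \<Rightarrow> nat. sum k UNIV = K}"
proof (rule finite_subset)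
  show "{k :: 'n \<Rightarrow> nat. sum k UNIV = K} \<subseteq> Pi\<^sub>E UNIV (\<lambda>_. {..K})"
  proof
    fix k :: "'n \<Rightarrow> nat" assume "k \<in> {k. sum k UNIV = K}"
    then have "k m \<le> K" for m using member_le_sum[of m UNIV k] by auto
    then show "k \<in> Pi\<^sub>E UNIV (\<lambda>_. {..K})" by (auto simp: PiE_UNIV_domain)
  qed
  show "finite (Pi\<^sub>E (UNIV :: 'n set) (\<lambda>_. {..K}))" by (intro finite_PiE) auto
qed

definition skew :: "'a::field \<Rightarrow> 'a" where
  "skew y = y - inverse y"

lemma qbr_skew: "qbr w Q m = (\<Prod>l<m. skew (Q ^ l * w))"
  by (simp add: qbr_def skew_def)

lemma skew_inverse: "skew (inverse y) = - skew y"
  by (simp add: skew_def)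

lemma skew_sign: "e \<in> {1, -1} \<Longrightarrow> skew (e * y) = e * skew y"
  by (auto simp: skew_def)

lemma skew_eq_0_iff: "y \<noteq> 0 \<Longrightarrow> skew y = 0 \<longleftrightarrow> y ^ 2 = 1"
  by (auto simp: skew_def power2_eq_square field_simps)

lemma skew_power_int_eq_0_iff:
  fixes Q :: "'a::field"
  assumes Q: "Q \<noteq> 0" and Q_generic: "\<forall>m::nat. m > 0 \<longrightarrow> (Q ^ 2) ^ m \<noteq> 1"
  shows "skew (Q powi r) = 0 \<longleftrightarrow> r = 0"
proof -
  have "(Q powi r) ^ 2 = (Q ^ 2) powi r"
    by (simp add: power2_eq_square power_int_mult_distrib)
  moreover have "(Q ^ 2) powi r = 1 \<longleftrightarrow> r = 0"
  proof (cases r rule: int_cases2)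
    case (nonneg n)
    then show ?thesis using Q_generic by (cases "n = 0") auto
  next
    case (nonpos n)
    then show ?thesis using Q_generic by (cases "n = 0") (auto simp: power_int_minus)
  qed
  ultimately show ?thesis using Q by (simp add: skew_eq_0_iff)
qed

lemma qbr_add: "qbr w Q (m + n) = qbr w Q m * qbr (Q ^ m * w) Q n"
  by (induction n) (simp_all add: qbr_skew power_add ac_simps)

lemma qbr_sign: "e \<in> {1, -1} \<Longrightarrow> qbr (e * w) Q n = e ^ n * qbr w Q n"
  by (simp add: qbr_skew skew_sign mult.left_commute[of _ e] prod.distrib)

lemma qbr_eq_0_iff: "qbr w Q n = 0 \<longleftrightarrow> (\<exists>l<n. skew (Q ^ l * w) = 0)"
  by (auto simp: qbr_skew)

text \<open>For \<open>p \<ge> 0\<close> both sides equal \<open>[w;q]_p [q^p w;q]_a [q^p w;q]_a'\<close>, for \<open>p < 0\<close> both equal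
  \<open>[q^p w;q]_(-p) [w;q]_b [w;q]_b'\<close>.\<close>
lemma qbr_exchange:
  fixes Q :: complex
  assumes Q: "Q \<noteq> 0" and a': "int a' = int b - p" and b': "int b' = int a + p"
  shows "qbr (Q powi p * w) Q a * qbr w Q b = qbr (Q powi p * w) Q a' * qbr w Q b'"
proof (cases p rule: int_cases2)
  case (nonneg s)
  then have b: "b = s + a'" "b' = s + a" using a' b' by linarith+
  show ?thesis unfolding b nonneg qbr_add by (simp add: ac_simps)
next
  case (nonpos s)
  then have a: "a = s + b'" "a' = s + b" using a' b' by linarith+
  have shift: "Q ^ s * (Q powi p * w) = w" using Q by (simp add: nonpos power_int_minus)
  show ?thesis unfolding a qbr_add shift by (simp add: ac_simps)
qed

definition qbr_omit :: "complex \<Rightarrow> complex \<Rightarrow> nat \<Rightarrow> nat \<Rightarrow> complex" where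
  "qbr_omit w Q m l0 = (\<Prod>l\<in>{..<m} - {l0}. skew (Q ^ l * w))"

lemma qbr_omit_split: "l0 < m \<Longrightarrow> qbr w Q m = skew (Q ^ l0 * w) * qbr_omit w Q m l0"
  unfolding qbr_skew qbr_omit_def by (subst prod.remove[of _ l0]) auto

lemma qbr_omit_eq_0_iff: "qbr_omit w Q m l0 = 0 \<longleftrightarrow> (\<exists>l<m. l \<noteq> l0 \<and> skew (Q ^ l * w) = 0)"
  by (auto simp: qbr_omit_def)

lemma qbr_omit_sign:
  "e \<in> {1, -1} \<Longrightarrow> l0 < m \<Longrightarrow> qbr_omit (e * w) Q m l0 = e ^ (m - 1) * qbr_omit w Q m l0"
  by (simp add: qbr_omit_def skew_sign mult.left_commute[of _ e] prod.distrib card_Diff_singleton)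

definition qratio :: "complex \<Rightarrow> complex \<Rightarrow> complex \<Rightarrow> nat \<Rightarrow> complex" where
  "qratio S Q w n = qbr (S * w) Q n / qbr w Q n"

lemma qratio_sign:
  assumes e: "e \<in> {1, -1}"
  shows "qratio S Q (e * w) n = qratio S Q w n"
proof -
  have Se: "S * (e * w) = e * (S * w)" by (simp add: ac_simps)
  have "e \<noteq> 0" using e by auto
  then show ?thesis unfolding qratio_def Se qbr_sign[OF e] by simp
qed

lemma qratio_exchange:
  fixes Q :: complex
  assumes "Q \<noteq> 0" and "int a' = int b - p" and "int b' = int a + p"
  shows "qratio S Q (Q powi p * w) a * qratio S Q w b = qratio S Q (Q powi p * w) a' * qratio S Q w b'"
proof -
  have S: "S * (Q powi p * w) = Q powi p * (S * w)" by (simp add: ac_simps)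
  show ?thesis
    unfolding qratio_def times_divide_times_eq S qbr_exchange[OF assms, of w]
      qbr_exchange[OF assms, of "S * w"] by simp
qed

lemma qbr_ne_0_generic:
  fixes Q A B :: complex
  assumes Q: "Q \<noteq> 0" and A: "A \<noteq> 0" and B: "B \<noteq> 0"
    and generic: "\<forall>s::int. A ^ 2 \<noteq> (Q ^ 2) powi s * B ^ 2"
  shows "qbr (inverse (Q ^ k) * (A / B)) Q n \<noteq> 0"
proof
  assume "qbr (inverse (Q ^ k) * (A / B)) Q n = 0"
  then obtain l where "skew (Q ^ l * (inverse (Q ^ k) * (A / B))) = 0"
    by (auto simp: qbr_eq_0_iff)
  then have "(Q ^ l * (inverse (Q ^ k) * (A / B))) ^ 2 = 1"
    using Q A B by (simp add: skew_eq_0_iff)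
  then have "(Q ^ 2) ^ l * A ^ 2 = (Q ^ 2) ^ k * B ^ 2"
    using Q B by (simp add: power_mult_distrib field_simps power_inverse flip: power_mult)
  then have "A ^ 2 = (Q ^ 2) ^ k / (Q ^ 2) ^ l * B ^ 2"
    using Q by (simp add: field_simps)
  also have "(Q ^ 2) ^ k / (Q ^ 2) ^ l = (Q ^ 2) powi (int k - int l)"
    using Q by (simp add: power_int_diff)
  finally show False using generic by blast
qed

lemma qbr_ratio_ne_0_generic:
  fixes Q A B :: complex
  assumes "Q \<noteq> 0" and "A \<noteq> 0" and "B \<noteq> 0" and "\<forall>s::int. A ^ 2 \<noteq> (Q ^ 2) powi s * B ^ 2"
  shows "qbr (A / B) Q n \<noteq> 0"
  using qbr_ne_0_generic[OF assms, of 0] by simp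

lemma skew_sign_power_int_ne_0:
  fixes Q e :: complex
  assumes Q: "Q \<noteq> 0" and Q_generic: "\<forall>m::nat. m > 0 \<longrightarrow> (Q ^ 2) ^ m \<noteq> 1" and e: "e \<in> {1, -1}"
    and "s + int l \<noteq> 0"
  shows "skew (Q ^ l * (e * Q powi s)) \<noteq> 0"
proof -
  have arg: "Q ^ l * (e * Q powi s) = e * Q powi (s + int l)"
    using Q by (simp add: power_int_add ac_simps)
  have "skew (Q powi (s + int l)) \<noteq> 0"
    using assms(4) skew_power_int_eq_0_iff[OF Q Q_generic] by simp
  moreover have "e \<noteq> 0" using e by auto
  ultimately show ?thesis unfolding arg skew_sign[OF e] by simp
qed

lemma qbr_power_int_ne_0:
  fixes Q e :: complex
  assumes "Q \<noteq> 0" and "\<forall>m::nat. m > 0 \<longrightarrow> (Q ^ 2) ^ m \<noteq> 1" and "e \<in> {1, -1}"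
    and "\<forall>l<n. s + int l \<noteq> 0"
  shows "qbr (e * Q powi s) Q n \<noteq> 0"
  using assms skew_sign_power_int_ne_0[OF assms(1-3)] by (auto simp: qbr_eq_0_iff)

lemma qbr_omit_power_int_ne_0:
  fixes Q e :: complex
  assumes "Q \<noteq> 0" and "\<forall>m::nat. m > 0 \<longrightarrow> (Q ^ 2) ^ m \<noteq> 1" and "e \<in> {1, -1}"
    and "\<forall>l<n. l \<noteq> l0 \<longrightarrow> s + int l \<noteq> 0"
  shows "qbr_omit (e * Q powi s) Q n l0 \<noteq> 0"
  using assms skew_sign_power_int_ne_0[OF assms(1-3)] by (auto simp: qbr_omit_eq_0_iff)

lemma qbr_self_ne_0:
  fixes Q :: complex
  assumes Q: "Q \<noteq> 0" and Q_generic: "\<forall>m::nat. m > 0 \<longrightarrow> (Q ^ 2) ^ m \<noteq> 1"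
  shows "qbr Q Q n \<noteq> 0"
  using qbr_power_int_ne_0[OF Q Q_generic, where e = 1 and s = 1 and n = n] by simp

section \<open>Functions whose differences across a hypersurface factor\<close>

text \<open>If \<open>\<pi>\<close> projects onto a hypersurface \<open>\<delta> = 0\<close> through \<open>c\<close> and \<open>h \<circ> \<pi> = 0\<close>, then \<open>h / \<delta>\<close>
  extends continuously to \<open>c\<close> as soon as \<open>diff_factors \<pi> \<delta> c h\<close> holds.\<close>
definition diff_factors :: "('a::t2_space \<Rightarrow> 'a) \<Rightarrow> ('a \<Rightarrow> 'b::real_normed_field) \<Rightarrow> 'a \<Rightarrow> ('a \<Rightarrow> 'b) \<Rightarrow> bool" where
  "diff_factors \<pi> \<delta> c f \<longleftrightarrow>
     isCont f c \<and> (\<exists>D. isCont D c \<and> (\<forall>\<^sub>F z in nhds c. f z - f (\<pi> z) = \<delta> z * D z))"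

lemma diff_factors_invariant: "isCont f c \<Longrightarrow> (\<And>z. f (\<pi> z) = f z) \<Longrightarrow> diff_factors \<pi> \<delta> c f"
  unfolding diff_factors_def by (auto intro!: exI[of _ "\<lambda>z. 0"])

lemma diff_factors_const: "diff_factors \<pi> \<delta> c (\<lambda>z. k)"
  by (rule diff_factors_invariant) simp_all

lemma diff_factors_add:
  "diff_factors \<pi> \<delta> c f \<Longrightarrow> diff_factors \<pi> \<delta> c g \<Longrightarrow> diff_factors \<pi> \<delta> c (\<lambda>z. f z + g z)"
  unfolding diff_factors_def
proof (elim conjE exE, intro conjI exI)
  fix Df Dg
  assume "isCont f c" "isCont g c" "isCont Df c" "isCont Dg c"
    and "\<forall>\<^sub>F z in nhds c. f z - f (\<pi> z) = \<delta> z * Df z" "\<forall>\<^sub>F z in nhds c. g z - g (\<pi> z) = \<delta> z * Dg z"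
  then show "isCont (\<lambda>z. f z + g z) c" "isCont (\<lambda>z. Df z + Dg z) c"
    and "\<forall>\<^sub>F z in nhds c. f z + g z - (f (\<pi> z) + g (\<pi> z)) = \<delta> z * (Df z + Dg z)"
    by (auto intro: continuous_intros elim: eventually_elim2 simp: algebra_simps)
qed

lemma diff_factors_minus: "diff_factors \<pi> \<delta> c f \<Longrightarrow> diff_factors \<pi> \<delta> c (\<lambda>z. - f z)"
  unfolding diff_factors_def
proof (elim conjE exE, intro conjI exI)
  fix Df
  assume "isCont f c" "isCont Df c" "\<forall>\<^sub>F z in nhds c. f z - f (\<pi> z) = \<delta> z * Df z"
  then show "isCont (\<lambda>z. - f z) c" "isCont (\<lambda>z. - Df z) c"
    and "\<forall>\<^sub>F z in nhds c. - f z - - f (\<pi> z) = \<delta> z * - Df z"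
    by (auto intro: continuous_intros elim: eventually_mono simp: algebra_simps)
qed

lemma diff_factors_diff:
  "diff_factors \<pi> \<delta> c f \<Longrightarrow> diff_factors \<pi> \<delta> c g \<Longrightarrow> diff_factors \<pi> \<delta> c (\<lambda>z. f z - g z)"
  using diff_factors_add[of \<pi> \<delta> c f "\<lambda>z. - g z"] diff_factors_minus[of \<pi> \<delta> c g] by simp

context
  fixes \<pi> :: "'a::t2_space \<Rightarrow> 'a" and c :: 'a
  assumes cont_\<pi>: "isCont \<pi> c" and fixed: "\<pi> c = c"
begin

lemma isCont_compose_fixed: "isCont f c \<Longrightarrow> isCont (\<lambda>z. f (\<pi> z)) c"
  using isCont_o2[OF cont_\<pi>, of f] fixed by simp

lemma diff_factors_mult:
  fixes f g :: "'a \<Rightarrow> 'b::real_normed_field"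
  assumes "diff_factors \<pi> \<delta> c f" and "diff_factors \<pi> \<delta> c g"
  shows "diff_factors \<pi> \<delta> c (\<lambda>z. f z * g z)"
proof -
  obtain Df Dg where f: "isCont f c" "isCont Df c" "\<forall>\<^sub>F z in nhds c. f z - f (\<pi> z) = \<delta> z * Df z"
    and g: "isCont g c" "isCont Dg c" "\<forall>\<^sub>F z in nhds c. g z - g (\<pi> z) = \<delta> z * Dg z"
    using assms unfolding diff_factors_def by blast
  have "isCont (\<lambda>z. Df z * g z + f (\<pi> z) * Dg z) c"
    using f g isCont_compose_fixed[OF f(1)] by (auto intro: continuous_intros)
  moreover have "\<forall>\<^sub>F z in nhds c. f z * g z - f (\<pi> z) * g (\<pi> z) = \<delta> z * (Df z * g z + f (\<pi> z) * Dg z)"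
    using f(3) g(3)
  proof eventually_elim
    case (elim z)
    have "f z * g z - f (\<pi> z) * g (\<pi> z) = (f z - f (\<pi> z)) * g z + f (\<pi> z) * (g z - g (\<pi> z))"
      by (simp add: algebra_simps)
    with elim show ?case by (simp add: algebra_simps)
  qed
  ultimately show ?thesis using f g unfolding diff_factors_def by (auto intro: continuous_intros)
qed

lemma diff_factors_inverse:
  fixes f :: "'a \<Rightarrow> 'b::real_normed_field"
  assumes "diff_factors \<pi> \<delta> c f" and nz: "f c \<noteq> 0"
  shows "diff_factors \<pi> \<delta> c (\<lambda>z. inverse (f z))"
proof -
  obtain Df where f: "isCont f c" "isCont Df c" "\<forall>\<^sub>F z in nhds c. f z - f (\<pi> z) = \<delta> z * Df z"
    using assms unfolding diff_factors_def by blast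
  have f\<pi>: "isCont (\<lambda>z. f (\<pi> z)) c" by (rule isCont_compose_fixed[OF f(1)])
  have "isCont (\<lambda>z. - Df z / (f z * f (\<pi> z))) c"
    using f f\<pi> nz fixed by (auto intro!: continuous_intros)
  moreover have "\<forall>\<^sub>F z in nhds c. f z \<noteq> 0" and "\<forall>\<^sub>F z in nhds c. f (\<pi> z) \<noteq> 0"
    using f(1) f\<pi> nz fixed unfolding isCont_def eventually_nhds_conv_at
    by (auto simp: tendsto_imp_eventually_ne)
  then have "\<forall>\<^sub>F z in nhds c. inverse (f z) - inverse (f (\<pi> z)) = \<delta> z * (- Df z / (f z * f (\<pi> z)))"
    using f(3) by eventually_elim (simp add: inverse_diff_inverse field_simps)
  ultimately show ?thesis using f nz unfolding diff_factors_def by (auto intro: continuous_intros)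
qed

lemma diff_factors_divide:
  fixes f g :: "'a \<Rightarrow> 'b::real_normed_field"
  shows "diff_factors \<pi> \<delta> c f \<Longrightarrow> diff_factors \<pi> \<delta> c g \<Longrightarrow> g c \<noteq> 0 \<Longrightarrow> diff_factors \<pi> \<delta> c (\<lambda>z. f z / g z)"
  using diff_factors_mult[OF _ diff_factors_inverse, of \<delta> f g] by (simp add: divide_inverse)

lemma diff_factors_prod:
  fixes f :: "'i \<Rightarrow> 'a \<Rightarrow> 'b::real_normed_field"
  shows "finite A \<Longrightarrow> (\<And>a. a \<in> A \<Longrightarrow> diff_factors \<pi> \<delta> c (f a)) \<Longrightarrow> diff_factors \<pi> \<delta> c (\<lambda>z. \<Prod>a\<in>A. f a z)"
  by (induction A rule: finite_induct) (auto intro: diff_factors_const diff_factors_mult)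

lemma diff_factors_skew:
  fixes f :: "'a \<Rightarrow> 'b::real_normed_field"
  shows "diff_factors \<pi> \<delta> c f \<Longrightarrow> f c \<noteq> 0 \<Longrightarrow> diff_factors \<pi> \<delta> c (\<lambda>z. skew (f z))"
  unfolding skew_def by (intro diff_factors_diff diff_factors_inverse)

lemma diff_factors_qbr:
  "diff_factors \<pi> \<delta> c f \<Longrightarrow> f c \<noteq> 0 \<Longrightarrow> Q \<noteq> 0 \<Longrightarrow> diff_factors \<pi> \<delta> c (\<lambda>z. qbr (f z) Q n)"
  unfolding qbr_skew by (intro diff_factors_prod diff_factors_skew diff_factors_mult diff_factors_const) auto

lemma diff_factors_qbr_omit:
  "diff_factors \<pi> \<delta> c f \<Longrightarrow> f c \<noteq> 0 \<Longrightarrow> Q \<noteq> 0 \<Longrightarrow> diff_factors \<pi> \<delta> c (\<lambda>z. qbr_omit (f z) Q n l0)"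
  unfolding qbr_omit_def by (intro diff_factors_prod diff_factors_skew diff_factors_mult diff_factors_const) auto

lemma diff_factors_qratio:
  assumes "diff_factors \<pi> \<delta> c f" and "f c \<noteq> 0" and "S \<noteq> 0" and "Q \<noteq> 0" and "qbr (f c) Q n \<noteq> 0"
  shows "diff_factors \<pi> \<delta> c (\<lambda>z. qratio S Q (f z) n)"
  unfolding qratio_def using assms
  by (intro diff_factors_divide diff_factors_qbr diff_factors_mult diff_factors_const) auto

end

lemma diff_factors_tendsto_quotient:
  assumes h: "diff_factors \<pi> \<delta> c h" and vanishes: "\<forall>\<^sub>F z in nhds c. h (\<pi> z) = 0"
    and \<kappa>: "isCont \<kappa> c" "\<kappa> c \<noteq> 0" and \<delta>: "\<forall>z\<in>S. \<delta> z \<noteq> 0"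
  shows "\<exists>l. ((\<lambda>z. h z / (\<delta> z * \<kappa> z)) \<longlongrightarrow> l) (at c within S)"
proof -
  obtain D where D: "isCont D c" and "\<forall>\<^sub>F z in nhds c. h z - h (\<pi> z) = \<delta> z * D z"
    using h unfolding diff_factors_def by blast
  with vanishes have "\<forall>\<^sub>F z in nhds c. h z = \<delta> z * D z"
    by (auto elim: eventually_elim2)
  then have "\<forall>\<^sub>F z in at c within S. D z / \<kappa> z = h z / (\<delta> z * \<kappa> z)"
    using \<delta> unfolding eventually_at_filter by (auto elim: eventually_mono)
  moreover have "((\<lambda>z. D z / \<kappa> z) \<longlongrightarrow> D c / \<kappa> c) (at c within S)"
    using D \<kappa> by (intro tendsto_intros) (auto simp: isCont_def intro: tendsto_within_subset)
  ultimately show ?thesis by (blast intro: Lim_transform_eventually)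
qed

lemma isCont_qbr:
  "isCont f c \<Longrightarrow> f c \<noteq> 0 \<Longrightarrow> Q \<noteq> 0 \<Longrightarrow> isCont (\<lambda>z. qbr (f z) Q n) c"
  unfolding qbr_skew skew_def by (intro continuous_intros) auto

lemma isCont_qratio:
  "isCont f c \<Longrightarrow> f c \<noteq> 0 \<Longrightarrow> S \<noteq> 0 \<Longrightarrow> Q \<noteq> 0 \<Longrightarrow> qbr (f c) Q n \<noteq> 0 \<Longrightarrow>
    isCont (\<lambda>z. qratio S Q (f z) n) c"
  unfolding qratio_def by (intro continuous_intros isCont_qbr) auto

definition Xk_uu :: "complex \<Rightarrow> complex \<Rightarrow> ('n::finite \<Rightarrow> nat) \<Rightarrow> complex^'n \<Rightarrow> 'n \<Rightarrow> 'n \<Rightarrow> complex" where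
  "Xk_uu T Q k U m m' = qratio (inverse T) Q (inverse (Q ^ k m') * (U$m / U$m')) (k m)"

definition Xk_uv :: "complex \<Rightarrow> complex \<Rightarrow> ('n::finite \<Rightarrow> nat) \<Rightarrow> complex^'n \<Rightarrow> complex^'n \<Rightarrow> 'n \<Rightarrow> 'n \<Rightarrow> complex" where
  "Xk_uv T Q k U V a m = qratio T Q (U$m / V$a) (k m)"

lemma Xk_factors:
  "Xk T Q k U V = (\<Prod>m\<in>UNIV. qratio T Q Q (k m)) * (\<Prod>m\<in>UNIV. \<Prod>m'\<in>UNIV - {m}. Xk_uu T Q k U m m')
     * (\<Prod>a\<in>UNIV. \<Prod>m\<in>UNIV. Xk_uv T Q k U V a m)"
  by (simp add: Xk_def qratio_def Xk_uu_def Xk_uv_def mult.commute[of Q T] mult.assoc)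

definition Xk_off :: "complex \<Rightarrow> complex \<Rightarrow> ('n::finite \<Rightarrow> nat) \<Rightarrow> 'n \<Rightarrow> 'n \<Rightarrow> complex^'n \<Rightarrow> complex^'n \<Rightarrow> complex" where
  "Xk_off T Q k i j U V =
     (\<Prod>m\<in>UNIV - {i, j}. qratio T Q Q (k m)) *
     (\<Prod>m\<in>UNIV - {i, j}. Xk_uu T Q k U i m * Xk_uu T Q k U j m * Xk_uu T Q k U m i * Xk_uu T Q k U m j) *
     (\<Prod>m\<in>UNIV - {i, j}. \<Prod>m'\<in>UNIV - {i, j} - {m}. Xk_uu T Q k U m m') *
     (\<Prod>a\<in>UNIV. Xk_uv T Q k U V a i * Xk_uv T Q k U V a j * (\<Prod>m\<in>UNIV - {i, j}. Xk_uv T Q k U V a m))"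

definition pair_factor :: "complex \<Rightarrow> complex \<Rightarrow> nat \<Rightarrow> nat \<Rightarrow> complex \<Rightarrow> complex" where
  "pair_factor T Q a b x = qratio T Q Q a * qratio T Q Q b *
     qratio (inverse T) Q (inverse (Q ^ b) * x) a * qratio (inverse T) Q (inverse (Q ^ a) * inverse x) b"

lemma Xk_split_pair:
  fixes k :: "'n::finite \<Rightarrow> nat"
  assumes ij: "i \<noteq> j"
  shows "Xk T Q k U V = Xk_off T Q k i j U V * pair_factor T Q (k i) (k j) (U$i / U$j)"
proof -
  have split: "prod f UNIV = f i * f j * prod f (UNIV - {i, j})" for f :: "'n \<Rightarrow> complex"
    using ij by (simp add: prod_remove2)
  have pair: "qratio T Q Q (k i) * qratio T Q Q (k j) * Xk_uu T Q k U i j * Xk_uu T Q k U j i =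
      pair_factor T Q (k i) (k j) (U$i / U$j)"
    by (simp add: pair_factor_def Xk_uu_def inverse_divide)
  show ?thesis
    unfolding Xk_factors prod_offdiag_split_pair[OF ij] split[of "\<lambda>m. qratio T Q Q (k m)"]
      split[of "Xk_uv T Q k U V _"] Xk_off_def pair[symmetric]
    by (simp only: ac_simps)
qed

definition pair_num :: "complex \<Rightarrow> complex \<Rightarrow> nat \<Rightarrow> nat \<Rightarrow> complex \<Rightarrow> complex" where
  "pair_num T Q a b x = qbr (T * Q) Q a * qbr (T * Q) Q b *
     qbr (inverse T * (inverse (Q ^ b) * x)) Q a * qbr (inverse T * (inverse (Q ^ a) * inverse x)) Q b"

definition pair_den_left :: "complex \<Rightarrow> nat \<Rightarrow> nat \<Rightarrow> complex \<Rightarrow> nat \<Rightarrow> complex" where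
  "pair_den_left Q a b x l0 = qbr Q Q a * qbr Q Q b *
     qbr_omit (inverse (Q ^ b) * x) Q a l0 * qbr (inverse (Q ^ a) * inverse x) Q b"

definition pair_den_right :: "complex \<Rightarrow> nat \<Rightarrow> nat \<Rightarrow> complex \<Rightarrow> nat \<Rightarrow> complex" where
  "pair_den_right Q a b x l0 = qbr Q Q a * qbr Q Q b *
     qbr (inverse (Q ^ b) * x) Q a * qbr_omit (inverse (Q ^ a) * inverse x) Q b l0"

lemma pair_factor_pole_left:
  "l0 < a \<Longrightarrow> pair_factor T Q a b x =
     pair_num T Q a b x / (pair_den_left Q a b x l0 * skew (Q ^ l0 * (inverse (Q ^ b) * x)))"
  unfolding pair_factor_def pair_num_def pair_den_left_def qratio_def
    qbr_omit_split[of l0 a "inverse (Q ^ b) * x" Q]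
  by (simp add: ac_simps)

lemma pair_factor_pole_right:
  "l0 < b \<Longrightarrow> pair_factor T Q a b x =
     pair_num T Q a b x / (pair_den_right Q a b x l0 * skew (Q ^ l0 * (inverse (Q ^ a) * inverse x)))"
  unfolding pair_factor_def pair_num_def pair_den_right_def qratio_def
    qbr_omit_split[of l0 b "inverse (Q ^ a) * inverse x" Q]
  by (simp add: ac_simps)

lemma Xk_exchange_sum:
  fixes k :: "'n::finite \<Rightarrow> nat" and Q :: complex and U V :: "complex^'n"
  assumes ij: "i \<noteq> j" and Q: "Q \<noteq> 0"
    and a': "int a' = int (k j) - p" and b': "int b' = int (k i) + p"
    and pole_k: "a' < k i" and pole_k': "k j < b'"
  defines "k' \<equiv> k(i := a', j := b')" and "x \<equiv> U$i / U$j"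
  shows "Xk T Q k U V + Xk T Q k' U V =
    (Xk_off T Q k i j U V * (pair_num T Q (k i) (k j) x / pair_den_left Q (k i) (k j) x a')
     - Xk_off T Q k' i j U V * (pair_num T Q a' b' x / pair_den_right Q a' b' x (k j)))
    / skew (Q powi (- p) * x)"
proof -
  have "Q ^ a' = Q ^ k j * Q powi (- p)"
    using Q a' by (metis power_int_add power_int_of_nat power_int_not_zero uminus_add_conv_diff add.commute)
  then have left: "Q ^ a' * (inverse (Q ^ k j) * x) = Q powi (- p) * x"
    and right: "Q ^ k j * (inverse (Q ^ a') * inverse x) = inverse (Q powi (- p) * x)"
    using Q by (simp_all add: field_simps)
  have k': "k' i = a'" "k' j = b'" using ij by (auto simp: k'_def)
  show ?thesis
    unfolding Xk_split_pair[OF ij, of T Q k] Xk_split_pair[OF ij, of T Q k'] x_def[symmetric] k'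
      pair_factor_pole_left[OF pole_k] pair_factor_pole_right[OF pole_k'] left right skew_inverse
    by (simp add: diff_divide_distrib)
qed

lemma inverse_power_shift:
  fixes Q e :: complex
  assumes Q: "Q \<noteq> 0" and e: "e \<in> {1, -1}" and b': "int b' = int a + p"
  shows "inverse (Q ^ a) * (X / (e * Q powi p * Y)) = e * (inverse (Q ^ b') * (X / Y))"
proof -
  have "Q ^ b' = Q ^ a * Q powi p"
    using Q b' by (metis power_int_add power_int_of_nat)
  then show ?thesis using e by (auto simp: field_simps)
qed

context
  fixes i j :: "'n::finite" and k :: "'n \<Rightarrow> nat" and Q e :: complex and U :: "complex^'n"
    and p :: int and a' b' :: nat
  assumes ij: "i \<noteq> j" and Q: "Q \<noteq> 0" and e: "e \<in> {1, -1}"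
    and on_hyp: "U$i = e * Q powi p * U$j"
    and a': "int a' = int (k j) - p" and b': "int b' = int (k i) + p"
begin

lemma Xk_uu_from_pair_exchange:
  assumes "m \<noteq> i" and "m \<noteq> j"
  shows "Xk_uu T Q (k(i := a', j := b')) U i m * Xk_uu T Q (k(i := a', j := b')) U j m =
    Xk_uu T Q k U i m * Xk_uu T Q k U j m"
proof -
  have arg: "inverse (Q ^ k m) * (U$i / U$m) = e * (Q powi p * (inverse (Q ^ k m) * (U$j / U$m)))"
    unfolding on_hyp by (simp add: ac_simps)
  show ?thesis
    unfolding Xk_uu_def fun_upd_other[OF ij] fun_upd_same fun_upd_other[OF assms(1)] fun_upd_other[OF assms(2)]
      arg qratio_sign[OF e]
    by (rule qratio_exchange[OF Q a' b', symmetric])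
qed

lemma Xk_uu_to_pair_exchange:
  assumes "m \<noteq> i" and "m \<noteq> j"
  shows "Xk_uu T Q (k(i := a', j := b')) U m i * Xk_uu T Q (k(i := a', j := b')) U m j =
    Xk_uu T Q k U m i * Xk_uu T Q k U m j"
proof -
  have a: "int (k j) = int a' + p" using a' by simp
  have shift_i: "inverse (Q ^ k i) * (U$m / U$i) = e * (inverse (Q ^ b') * (U$m / U$j))"
    unfolding on_hyp by (rule inverse_power_shift[OF Q e b'])
  have shift_i': "inverse (Q ^ a') * (U$m / U$i) = e * (inverse (Q ^ k j) * (U$m / U$j))"
    unfolding on_hyp by (rule inverse_power_shift[OF Q e a])
  show ?thesis
    unfolding Xk_uu_def fun_upd_other[OF ij] fun_upd_same fun_upd_other[OF assms(1)] fun_upd_other[OF assms(2)]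
      shift_i shift_i' qratio_sign[OF e]
    by (rule mult.commute)
qed

lemma Xk_uv_pair_exchange:
  "Xk_uv T Q (k(i := a', j := b')) U V a i * Xk_uv T Q (k(i := a', j := b')) U V a j =
    Xk_uv T Q k U V a i * Xk_uv T Q k U V a j"
proof -
  have arg: "U$i / V$a = e * (Q powi p * (U$j / V$a))"
    unfolding on_hyp by (simp add: ac_simps)
  show ?thesis
    unfolding Xk_uv_def fun_upd_other[OF ij] fun_upd_same arg qratio_sign[OF e]
    by (rule qratio_exchange[OF Q a' b', symmetric])
qed

lemma Xk_off_exchange: "Xk_off T Q (k(i := a', j := b')) i j U V = Xk_off T Q k i j U V"
proof -
  let ?k' = "k(i := a', j := b')" and ?rest = "UNIV - {i, j}"
  have regroup: "\<And>w x y z :: complex. w * x * y * z = (w * x) * (y * z)" by (simp only: mult.assoc)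
  have cross: "(\<Prod>m\<in>?rest. Xk_uu T Q ?k' U i m * Xk_uu T Q ?k' U j m * Xk_uu T Q ?k' U m i * Xk_uu T Q ?k' U m j) =
      (\<Prod>m\<in>?rest. Xk_uu T Q k U i m * Xk_uu T Q k U j m * Xk_uu T Q k U m i * Xk_uu T Q k U m j)"
  proof (rule prod.cong[OF refl])
    fix m assume "m \<in> ?rest"
    then have m: "m \<noteq> i" "m \<noteq> j" by auto
    show "Xk_uu T Q ?k' U i m * Xk_uu T Q ?k' U j m * Xk_uu T Q ?k' U m i * Xk_uu T Q ?k' U m j =
        Xk_uu T Q k U i m * Xk_uu T Q k U j m * Xk_uu T Q k U m i * Xk_uu T Q k U m j"
      by (simp only: regroup Xk_uu_from_pair_exchange[OF m] Xk_uu_to_pair_exchange[OF m])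
  qed
  have diag: "(\<Prod>m\<in>?rest. qratio T Q Q (?k' m)) = (\<Prod>m\<in>?rest. qratio T Q Q (k m))"
    by (intro prod.cong refl) simp
  have inner: "(\<Prod>m\<in>?rest. \<Prod>m'\<in>?rest - {m}. Xk_uu T Q ?k' U m m') =
      (\<Prod>m\<in>?rest. \<Prod>m'\<in>?rest - {m}. Xk_uu T Q k U m m')"
    by (intro prod.cong refl) (simp add: Xk_uu_def)
  have uv: "Xk_uv T Q ?k' U V a i * Xk_uv T Q ?k' U V a j * (\<Prod>m\<in>?rest. Xk_uv T Q ?k' U V a m) =
      Xk_uv T Q k U V a i * Xk_uv T Q k U V a j * (\<Prod>m\<in>?rest. Xk_uv T Q k U V a m)" for a
  proof -
    have "(\<Prod>m\<in>?rest. Xk_uv T Q ?k' U V a m) = (\<Prod>m\<in>?rest. Xk_uv T Q k U V a m)"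
      by (intro prod.cong refl) (simp add: Xk_uv_def)
    then show ?thesis by (simp only: Xk_uv_pair_exchange)
  qed
  show ?thesis
    unfolding Xk_off_def cross diag inner uv ..
qed

end

section \<open>The pair factor on u_i = \<plusminus>q^p u_j\<close>

definition consec :: "int \<Rightarrow> nat \<Rightarrow> int multiset" where
  "consec lo n = image_mset (\<lambda>l. lo + int l) (mset_set {..<n})"

lemma count_consec: "count (consec lo n) r = (if lo \<le> r \<and> r < lo + int n then 1 else 0)"
proof -
  have inj: "inj_on (\<lambda>l. lo + int l) {..<n}" by (auto simp: inj_on_def)
  have "r \<in> (\<lambda>l. lo + int l) ` {..<n} \<longleftrightarrow> lo \<le> r \<and> r < lo + int n"
  proof
    assume "lo \<le> r \<and> r < lo + int n"
    then show "r \<in> (\<lambda>l. lo + int l) ` {..<n}"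
      by (intro image_eqI[where x = "nat (r - lo)"]) auto
  qed auto
  then show ?thesis unfolding consec_def image_mset_mset_set[OF inj]
    by (simp add: count_mset_set')
qed

lemma size_consec [simp]: "size (consec lo n) = n"
  by (simp add: consec_def)

lemma size_negatives_consec:
  "size (filter_mset (\<lambda>r. r < 0) (consec lo n)) = nat (min (lo + int n) 0 - min lo 0)"
proof (induction n)
  case (Suc n)
  have "consec lo (Suc n) = consec lo n + {#lo + int n#}"
    by (simp add: consec_def lessThan_Suc)
  then show ?case using Suc by auto
qed (simp add: consec_def)

lemma prod_consec: "(\<Prod>l<n. f (lo + int l)) = (\<Prod>r\<in>#consec lo n. f r)"
  by (simp add: consec_def prod_unfold_prod_mset multiset.map_comp o_def)

lemma prod_consec_omit:
  assumes "l0 < n"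
  shows "(\<Prod>l\<in>{..<n} - {l0}. f (lo + int l)) = (\<Prod>r\<in>#consec lo n - {#lo + int l0#}. f r)"
proof -
  have "mset_set ({..<n} - {l0}) = mset_set {..<n} - {#l0#}" and "{#l0#} \<subseteq># mset_set {..<n}"
    using assms by (simp_all add: mset_set_Diff)
  then show ?thesis
    by (simp add: consec_def prod_unfold_prod_mset multiset.map_comp o_def image_mset_Diff)
qed

lemma qbr_power_int:
  fixes Q c :: complex
  assumes "Q \<noteq> 0"
  shows "qbr (c * Q powi s) Q n = (\<Prod>r\<in>#consec s n. skew (c * Q powi r))"
  unfolding qbr_skew prod_consec[symmetric]
  using assms by (intro prod.cong refl) (simp add: power_int_add ac_simps)

lemma qbr_omit_power_int:
  fixes Q c :: complex
  assumes "Q \<noteq> 0" and "l0 < n"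
  shows "qbr_omit (c * Q powi s) Q n l0 = (\<Prod>r\<in>#consec s n - {#s + int l0#}. skew (c * Q powi r))"
  unfolding qbr_omit_def prod_consec_omit[OF assms(2), symmetric]
  using assms(1) by (intro prod.cong refl) (simp add: power_int_add ac_simps)

lemma qbr_power_int':
  fixes Q :: complex
  assumes "Q \<noteq> 0"
  shows "qbr (Q powi s) Q n = (\<Prod>r\<in>#consec s n. skew (Q powi r))"
  using qbr_power_int[OF assms, of 1] by simp

lemma qbr_self_power_int:
  fixes Q :: complex
  assumes "Q \<noteq> 0"
  shows "qbr Q Q n = (\<Prod>r\<in>#consec 1 n. skew (Q powi r))"
  using qbr_power_int'[OF assms, of 1 n] by simp

lemma qbr_omit_power_int':
  fixes Q :: complex
  assumes "Q \<noteq> 0" and "l0 < n"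
  shows "qbr_omit (Q powi s) Q n l0 = (\<Prod>r\<in>#consec s n - {#s + int l0#}. skew (Q powi r))"
  using qbr_omit_power_int[OF assms, of 1] by simp

lemma prod_mset_skew_inverse:
  fixes T Q :: complex
  shows "(\<Prod>r\<in>#M. skew (inverse T * Q powi r)) =
    (-1) ^ size M * (\<Prod>r\<in>#image_mset uminus M. skew (T * Q powi r))"
proof (induction M)
  case (add x M)
  have "skew (inverse T * Q powi x) = - skew (T * Q powi (- x))"
    using skew_inverse[of "T * Q powi (- x)"] by (simp add: power_int_minus)
  then show ?case using add by simp
qed simp

text \<open>At \<open>U_i/U_j = e Q^p\<close> the factors of \<open>pair_num\<close> are \<open>\<plusminus>skew (T * Q powi r)\<close> and those of the
  denominators \<open>\<plusminus>skew (Q powi r)\<close>, with \<open>r\<close> running through these multisets; the factor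
  \<open>r = 0\<close>, which vanishes, is the one omitted.\<close>
definition num_exps :: "nat \<Rightarrow> nat \<Rightarrow> int \<Rightarrow> int multiset" where
  "num_exps a b p = consec 1 a + consec 1 b +
     image_mset uminus (consec (p - int b) a) + image_mset uminus (consec (- int a - p) b)"

definition den_exps_left :: "nat \<Rightarrow> nat \<Rightarrow> int \<Rightarrow> int multiset" where
  "den_exps_left a b p = consec 1 a + consec 1 b + (consec (p - int b) a - {#0#}) + consec (- int a - p) b"

definition den_exps_right :: "nat \<Rightarrow> nat \<Rightarrow> int \<Rightarrow> int multiset" where
  "den_exps_right a b p = consec 1 a + consec 1 b + consec (p - int b) a + (consec (- int a - p) b - {#0#})"

lemma num_exps_exchange:
  assumes "int a' = int b - p" and "int b' = int a + p"
  shows "num_exps a b p = num_exps a' b' p"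
  using assms by (simp add: multiset_eq_iff num_exps_def count_image_uminus count_consec)

lemma den_exps_exchange:
  assumes "int b - int a < p" and "p \<le> int b" and "int a' = int b - p" and "int b' = int a + p"
  shows "image_mset abs (den_exps_left a b p) = image_mset abs (den_exps_right a' b' p)"
    and "size (filter_mset (\<lambda>r. r < 0) (den_exps_left a b p)) =
         size (filter_mset (\<lambda>r. r < 0) (den_exps_right a' b' p))"
proof -
  show "image_mset abs (den_exps_left a b p) = image_mset abs (den_exps_right a' b' p)"
    using assms by (simp add: multiset_eq_iff den_exps_left_def den_exps_right_def count_image_abs count_consec)
  have no_zero: "filter_mset (\<lambda>r. r < 0) (M - {#0#}) = filter_mset (\<lambda>r. r < 0) M" for M :: "int multiset"
    by (simp add: multiset_eq_iff)
  show "size (filter_mset (\<lambda>r. r < 0) (den_exps_left a b p)) =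
        size (filter_mset (\<lambda>r. r < 0) (den_exps_right a' b' p))"
    unfolding den_exps_left_def den_exps_right_def filter_union_mset no_zero size_union size_negatives_consec
    using assms by (auto simp: min_def)
qed

lemma inverse_power_mult_sign_power_int:
  fixes Q e :: complex
  assumes "Q \<noteq> 0" and "e \<in> {1, -1}"
  shows "inverse (Q ^ b) * (e * Q powi p) = e * Q powi (p - int b)"
  using assms by (auto simp: power_int_diff field_simps)

lemma inverse_power_mult_inverse_sign_power_int:
  fixes Q e :: complex
  assumes "Q \<noteq> 0" and "e \<in> {1, -1}"
  shows "inverse (Q ^ a) * inverse (e * Q powi p) = e * Q powi (- int a - p)"
  using assms by (auto simp: power_int_diff power_int_minus field_simps)

lemma pair_num_at_power:
  fixes Q e :: complex
  assumes Q: "Q \<noteq> 0" and e: "e \<in> {1, -1}"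
  shows "pair_num T Q a b (e * Q powi p) = (- e) ^ (a + b) * (\<Prod>r\<in>#num_exps a b p. skew (T * Q powi r))"
proof -
  have args: "T * Q = T * Q powi 1"
    "inverse T * (e * Q powi s) = e * (inverse T * Q powi s)" for s
    by (simp_all add: ac_simps)
  show ?thesis
    unfolding pair_num_def inverse_power_mult_sign_power_int[OF Q e]
      inverse_power_mult_inverse_sign_power_int[OF Q e] args qbr_sign[OF e] qbr_power_int[OF Q] prod_mset_skew_inverse num_exps_def
    by (simp add: power_add power_minus[of e] ac_simps)
qed

lemma pair_den_left_at_power:
  fixes Q e :: complex
  assumes Q: "Q \<noteq> 0" and e: "e \<in> {1, -1}" and l0: "l0 < a" "int l0 = int b - p"
  shows "pair_den_left Q a b (e * Q powi p) l0 = e ^ (a - 1 + b) * (\<Prod>r\<in>#den_exps_left a b p. skew (Q powi r))"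
proof -
  note args = inverse_power_mult_sign_power_int[OF Q e] inverse_power_mult_inverse_sign_power_int[OF Q e]
  have omitted: "p - int b + int l0 = 0" using l0 by simp
  show ?thesis
    unfolding pair_den_left_def args qbr_sign[OF e] qbr_omit_sign[OF e l0(1)] qbr_self_power_int[OF Q]
      qbr_power_int'[OF Q] qbr_omit_power_int'[OF Q l0(1)] omitted den_exps_left_def
    by (simp add: power_add ac_simps)
qed

lemma pair_den_right_at_power:
  fixes Q e :: complex
  assumes Q: "Q \<noteq> 0" and e: "e \<in> {1, -1}" and l0: "l0 < b" "int l0 = int a + p"
  shows "pair_den_right Q a b (e * Q powi p) l0 = e ^ (a + (b - 1)) * (\<Prod>r\<in>#den_exps_right a b p. skew (Q powi r))"
proof -
  note args = inverse_power_mult_sign_power_int[OF Q e] inverse_power_mult_inverse_sign_power_int[OF Q e]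
  have omitted: "- int a - p + int l0 = 0" using l0 by simp
  show ?thesis
    unfolding pair_den_right_def args qbr_sign[OF e] qbr_omit_sign[OF e l0(1)] qbr_self_power_int[OF Q]
      qbr_power_int'[OF Q] qbr_omit_power_int'[OF Q l0(1)] omitted den_exps_right_def
    by (simp add: power_add ac_simps)
qed

lemma pair_num_exchange:
  fixes Q e :: complex
  assumes Q: "Q \<noteq> 0" and e: "e \<in> {1, -1}" and a': "int a' = int b - p" and b': "int b' = int a + p"
  shows "pair_num T Q a b (e * Q powi p) = pair_num T Q a' b' (e * Q powi p)"
proof -
  have "a + b = a' + b'" using a' b' by linarith
  then show ?thesis
    unfolding pair_num_at_power[OF Q e] num_exps_exchange[OF a' b'] by simp
qed

text \<open>Since \<open>skew (Q powi r)\<close> is odd in \<open>r\<close>, it suffices that the exponents agree up to sign, with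
  the same number of negative ones.\<close>
lemma pair_den_exchange:
  fixes Q e :: complex
  assumes Q: "Q \<noteq> 0" and e: "e \<in> {1, -1}"
    and p: "int b - int a < p" "p \<le> int b" and a': "int a' = int b - p" and b': "int b' = int a + p"
  shows "pair_den_left Q a b (e * Q powi p) a' = pair_den_right Q a' b' (e * Q powi p) b"
proof -
  have a'a: "a' < a" and bb': "b < b'" and b: "int b = int a' + p" using p a' b' by linarith+
  have exps: "a - 1 + b = a' + (b' - 1)" using a' b' a'a bb' by linarith
  have odd: "\<And>r. skew (Q powi (- r)) = - skew (Q powi r)"
    using skew_inverse by (simp add: power_int_minus)
  let ?f = "\<lambda>r. skew (Q powi r)" and ?neg = "\<lambda>M. size (filter_mset (\<lambda>r::int. r < 0) M)"
  have "pair_den_left Q a b (e * Q powi p) a' = e ^ (a - 1 + b) * (\<Prod>r\<in>#den_exps_left a b p. ?f r)"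
    by (rule pair_den_left_at_power[OF Q e a'a a'])
  also have "(\<Prod>r\<in>#den_exps_left a b p. ?f r) =
      (-1) ^ ?neg (den_exps_left a b p) * (\<Prod>r\<in>#image_mset abs (den_exps_left a b p). ?f r)"
    by (rule prod_mset_odd[where f = ?f, OF odd])
  also have "\<dots> = (-1) ^ ?neg (den_exps_right a' b' p) * (\<Prod>r\<in>#image_mset abs (den_exps_right a' b' p). ?f r)"
    unfolding den_exps_exchange[OF p a' b'] ..
  also have "\<dots> = (\<Prod>r\<in>#den_exps_right a' b' p. ?f r)"
    by (rule prod_mset_odd[where f = ?f, OF odd, symmetric])
  finally show ?thesis
    unfolding pair_den_right_at_power[OF Q e bb' b] exps .
qed

section \<open>Limits along u_i = \<plusminus>q^p u_j\<close>

type_synonym 'n point = "(complex^'n) \<times> (complex^'n)"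

lemma isCont_Xk:
  fixes c :: "'n::finite point"
  assumes "T \<noteq> 0" and "Q \<noteq> 0" and "\<forall>m. fst c $ m \<noteq> 0" and "\<forall>a. snd c $ a \<noteq> 0"
    and "\<And>m m'. m \<noteq> m' \<Longrightarrow> qbr (inverse (Q ^ k m') * (fst c $ m / fst c $ m')) Q (k m) \<noteq> 0"
    and "\<And>a m. qbr (fst c $ m / snd c $ a) Q (k m) \<noteq> 0"
  shows "isCont (\<lambda>z. Xk T Q k (fst z) (snd z)) c"
  unfolding Xk_factors Xk_uu_def Xk_uv_def
  using assms by (intro continuous_intros isCont_qratio) auto

lemma skew_power_ratio:
  fixes Q e A B :: complex
  assumes "Q \<noteq> 0" and "e \<in> {1, -1}" and "A \<noteq> 0" and "B \<noteq> 0"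
  shows "skew (Q powi (- p) * (A / B)) =
    (A - e * Q powi p * B) * (Q powi (- p) * (A + e * Q powi p * B) / (A * B))"
proof -
  have "Q powi p \<noteq> 0" and "e * e = 1" using assms by auto
  then show ?thesis using assms(3,4) by (simp add: skew_def power_int_minus field_simps)
qed

text \<open>In the square-root coordinates \<open>u_i = q^p u_j\<close> reads \<open>U_i = e Q^p U_j\<close> with a sign \<open>e\<close>.\<close>
locale uu_pole_point =
  fixes T Q :: complex and i j :: "'n::finite" and e :: complex and p :: int and c :: "'n point"
  assumes T: "T \<noteq> 0" and Q: "Q \<noteq> 0" and Q_generic: "\<forall>m::nat. m > 0 \<longrightarrow> (Q ^ 2) ^ m \<noteq> 1"
    and ij: "i \<noteq> j" and e: "e \<in> {1, -1}"
    and U: "\<forall>m. fst c $ m \<noteq> 0" and V: "\<forall>a. snd c $ a \<noteq> 0"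
    and on_hypersurface: "fst c $ i = e * Q powi p * fst c $ j"
    and UU_generic: "\<And>m m' s. m \<noteq> m' \<Longrightarrow> {m, m'} \<noteq> {i, j} \<Longrightarrow> (fst c $ m) ^ 2 \<noteq> (Q ^ 2) powi s * (fst c $ m') ^ 2"
    and UV_generic: "\<And>m a s. (fst c $ m) ^ 2 \<noteq> (Q ^ 2) powi s * (snd c $ a) ^ 2"
begin

definition onto_hyp :: "'n point \<Rightarrow> 'n point" where
  "onto_hyp z = ((\<chi> m. if m = i then e * Q powi p * fst z $ j else fst z $ m), snd z)"

definition hyp_eqn :: "'n point \<Rightarrow> complex" where
  "hyp_eqn z = fst z $ i - e * Q powi p * fst z $ j"

definition u_ratio :: "'n point \<Rightarrow> complex" where
  "u_ratio z = fst z $ i / fst z $ j"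

lemma isCont_onto_hyp: "isCont onto_hyp c"
  unfolding onto_hyp_def isCont_def by (intro tendsto_intros) (auto intro!: tendsto_intros)

lemma onto_hyp_fixes: "onto_hyp c = c"
  using on_hypersurface by (cases c) (auto simp: onto_hyp_def vec_eq_iff)

lemmas df_mult = diff_factors_mult[OF isCont_onto_hyp onto_hyp_fixes]
  and df_divide = diff_factors_divide[OF isCont_onto_hyp onto_hyp_fixes]
  and df_inverse = diff_factors_inverse[OF isCont_onto_hyp onto_hyp_fixes]
  and df_prod = diff_factors_prod[OF isCont_onto_hyp onto_hyp_fixes]
  and df_qbr = diff_factors_qbr[OF isCont_onto_hyp onto_hyp_fixes]
  and df_qbr_omit = diff_factors_qbr_omit[OF isCont_onto_hyp onto_hyp_fixes]
  and df_qratio = diff_factors_qratio[OF isCont_onto_hyp onto_hyp_fixes]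

lemma diff_factors_U: "diff_factors onto_hyp hyp_eqn c (\<lambda>z. fst z $ m)"
  unfolding diff_factors_def
proof (intro conjI exI)
  show "\<forall>\<^sub>F z in nhds c. fst z $ m - fst (onto_hyp z) $ m = hyp_eqn z * (if m = i then 1 else 0)"
    by (simp add: onto_hyp_def hyp_eqn_def)
qed (auto intro: continuous_intros)

lemma diff_factors_V: "diff_factors onto_hyp hyp_eqn c (\<lambda>z. snd z $ a)"
  by (rule diff_factors_invariant) (auto simp: onto_hyp_def intro: continuous_intros)

lemma diff_factors_UU: "diff_factors onto_hyp hyp_eqn c (\<lambda>z. C * (fst z $ m / fst z $ m'))"
  using U by (intro df_mult df_divide diff_factors_const diff_factors_U) auto

lemma diff_factors_UV: "diff_factors onto_hyp hyp_eqn c (\<lambda>z. fst z $ m / snd z $ a)"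
  using V by (intro df_divide diff_factors_U diff_factors_V) auto

lemma u_ratio_c: "u_ratio c = e * Q powi p"
  using on_hypersurface U by (simp add: u_ratio_def)

lemma diff_factors_u_ratio: "diff_factors onto_hyp hyp_eqn c u_ratio"
  using diff_factors_UU[of 1 i j] by (simp add: u_ratio_def[abs_def])

lemma diff_factors_Xk_off: "diff_factors onto_hyp hyp_eqn c (\<lambda>z. Xk_off T Q k i j (fst z) (snd z))"
proof -
  have uu: "diff_factors onto_hyp hyp_eqn c (\<lambda>z. Xk_uu T Q k (fst z) m m')"
    if "m \<noteq> m'" and "{m, m'} \<noteq> {i, j}" for m m'
    unfolding Xk_uu_def using T Q U UU_generic that
    by (intro df_qratio diff_factors_UU qbr_ne_0_generic) auto
  have uv: "diff_factors onto_hyp hyp_eqn c (\<lambda>z. Xk_uv T Q k (fst z) (snd z) a m)" for a m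
    unfolding Xk_uv_def using T Q U V UV_generic
    by (intro df_qratio diff_factors_UV qbr_ratio_ne_0_generic) auto
  show ?thesis
    unfolding Xk_off_def using ij
    by (intro df_mult df_prod diff_factors_const uu uv) (auto simp: doubleton_eq_iff)
qed

lemma diff_factors_pair_num: "diff_factors onto_hyp hyp_eqn c (\<lambda>z. pair_num T Q a b (u_ratio z))"
proof -
  have "u_ratio c \<noteq> 0" using e Q by (auto simp: u_ratio_c)
  then show ?thesis
    unfolding pair_num_def using T Q
    by (intro df_mult df_qbr df_inverse diff_factors_const diff_factors_u_ratio) auto
qed

lemma diff_factors_pair_left:
  assumes "\<forall>l<a. l \<noteq> l0 \<longrightarrow> p - int b + int l \<noteq> 0" and "\<forall>l<b. - int a - p + int l \<noteq> 0"
  shows "diff_factors onto_hyp hyp_eqn c (\<lambda>z. pair_num T Q a b (u_ratio z) / pair_den_left Q a b (u_ratio z) l0)"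
proof -
  have "u_ratio c \<noteq> 0" using e Q by (auto simp: u_ratio_c)
  moreover have "pair_den_left Q a b (u_ratio c) l0 \<noteq> 0"
    unfolding pair_den_left_def u_ratio_c inverse_power_mult_sign_power_int[OF Q e]
      inverse_power_mult_inverse_sign_power_int[OF Q e]
    using assms qbr_self_ne_0[OF Q Q_generic] qbr_power_int_ne_0[OF Q Q_generic e]
      qbr_omit_power_int_ne_0[OF Q Q_generic e] by simp
  ultimately show ?thesis
    unfolding pair_den_left_def using Q
    by (intro df_divide diff_factors_pair_num df_mult df_qbr df_qbr_omit df_inverse
        diff_factors_const diff_factors_u_ratio) auto
qed

lemma diff_factors_pair_right:
  assumes "\<forall>l<a. p - int b + int l \<noteq> 0" and "\<forall>l<b. l \<noteq> l0 \<longrightarrow> - int a - p + int l \<noteq> 0"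
  shows "diff_factors onto_hyp hyp_eqn c (\<lambda>z. pair_num T Q a b (u_ratio z) / pair_den_right Q a b (u_ratio z) l0)"
proof -
  have "u_ratio c \<noteq> 0" using e Q by (auto simp: u_ratio_c)
  moreover have "pair_den_right Q a b (u_ratio c) l0 \<noteq> 0"
    unfolding pair_den_right_def u_ratio_c inverse_power_mult_sign_power_int[OF Q e]
      inverse_power_mult_inverse_sign_power_int[OF Q e]
    using assms qbr_self_ne_0[OF Q Q_generic] qbr_power_int_ne_0[OF Q Q_generic e]
      qbr_omit_power_int_ne_0[OF Q Q_generic e] by simp
  ultimately show ?thesis
    unfolding pair_den_right_def using Q
    by (intro df_divide diff_factors_pair_num df_mult df_qbr df_qbr_omit df_inverse
        diff_factors_const diff_factors_u_ratio) auto
qed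

definition exchange :: "('n \<Rightarrow> nat) \<Rightarrow> 'n \<Rightarrow> nat" where
  "exchange k = k(i := nat (int (k j) - p), j := nat (int (k i) + p))"

text \<open>The denominators \<open>[q^(-k_j) u_i/u_j;q]_(k_i)\<close> and \<open>[q^(-k_i) u_j/u_i;q]_(k_j)\<close> of \<open>X_k\<close> vanish
  at \<open>c\<close> exactly for the \<open>k\<close> in the first resp. second part of this set.\<close>
definition poles :: "('n \<Rightarrow> nat) set" where
  "poles = {k. 0 \<le> int (k j) - p \<and> int (k j) - p < int (k i) \<or> 0 \<le> int (k i) + p \<and> int (k i) + p < int (k j)}"

lemma isCont_Xk_nonpole:
  assumes "k \<notin> poles"
  shows "isCont (\<lambda>z. Xk T Q k (fst z) (snd z)) c"
proof (rule isCont_Xk[OF T Q U V])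
  fix m m' :: 'n
  assume mm': "m \<noteq> m'"
  show "qbr (inverse (Q ^ k m') * (fst c $ m / fst c $ m')) Q (k m) \<noteq> 0"
  proof (cases "{m, m'} = {i, j}")
    case False
    then show ?thesis using Q U UU_generic mm' by (intro qbr_ne_0_generic) auto
  next
    case True
    have ratio: "fst c $ i / fst c $ j = e * Q powi p"
      using u_ratio_c by (simp add: u_ratio_def)
    then have ratio': "fst c $ j / fst c $ i = inverse (e * Q powi p)"
      by (metis inverse_divide)
    have "m = i \<and> m' = j \<or> m = j \<and> m' = i" using True mm' by (auto simp: doubleton_eq_iff)
    then show ?thesis
    proof
      assume "m = i \<and> m' = j"
      then have m: "m = i" "m' = j" by auto
      have "\<forall>l<k i. p - int (k j) + int l \<noteq> 0" using assms by (auto simp: poles_def)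
      then show ?thesis
        unfolding m ratio inverse_power_mult_sign_power_int[OF Q e]
        by (rule qbr_power_int_ne_0[OF Q Q_generic e])
    next
      assume "m = j \<and> m' = i"
      then have m: "m = j" "m' = i" by auto
      have "\<forall>l<k j. - int (k i) - p + int l \<noteq> 0" using assms by (auto simp: poles_def)
      then show ?thesis
        unfolding m ratio' inverse_power_mult_inverse_sign_power_int[OF Q e]
        by (rule qbr_power_int_ne_0[OF Q Q_generic e])
    qed
  qed
next
  show "qbr (fst c $ m / snd c $ a) Q (k m) \<noteq> 0" for a m
    using Q U V UV_generic by (intro qbr_ratio_ne_0_generic) auto
qed

definition hyp_cofactor :: "'n point \<Rightarrow> complex" where
  "hyp_cofactor z = Q powi (- p) * (fst z $ i + e * Q powi p * fst z $ j) / (fst z $ i * fst z $ j)"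

lemma isCont_hyp_cofactor: "isCont hyp_cofactor c" and hyp_cofactor_c: "hyp_cofactor c \<noteq> 0"
  unfolding hyp_cofactor_def using U Q e on_hypersurface by (auto intro!: continuous_intros)

lemma skew_u_ratio: "fst z $ i \<noteq> 0 \<Longrightarrow> fst z $ j \<noteq> 0 \<Longrightarrow> skew (Q powi (- p) * u_ratio z) = hyp_eqn z * hyp_cofactor z"
  unfolding u_ratio_def hyp_eqn_def hyp_cofactor_def by (rule skew_power_ratio[OF Q e])

lemma hyp_eqn_generic_pt: "z \<in> generic_pt Q \<Longrightarrow> hyp_eqn z \<noteq> 0"
proof
  assume z: "z \<in> generic_pt Q" and "hyp_eqn z = 0"
  moreover have "(e * Q powi p * x) ^ 2 = (Q ^ 2) powi p * x ^ 2" for x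
    using e by (auto simp: power_mult_distrib power_int_mult_distrib power2_eq_square)
  ultimately have "(fst z $ i) ^ 2 = (Q ^ 2) powi p * (fst z $ j) ^ 2"
    by (simp add: hyp_eqn_def)
  moreover have "(fst z $ i) ^ 2 \<noteq> (Q ^ 2) powi p * (fst z $ j) ^ 2"
    using z ij by (cases z) (auto simp: generic_pt_def)
  ultimately show False by contradiction
qed

lemma u_ratio_onto_hyp: "\<forall>\<^sub>F z in nhds c. u_ratio (onto_hyp z) = e * Q powi p"
proof -
  have "isCont (\<lambda>z. fst z $ j) c" by (intro continuous_intros)
  then have "\<forall>\<^sub>F z in nhds c. fst z $ j \<noteq> 0"
    using U unfolding isCont_def eventually_nhds_conv_at by (simp add: tendsto_imp_eventually_ne)
  then show ?thesis by eventually_elim (use ij in \<open>simp add: onto_hyp_def u_ratio_def\<close>)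
qed

context
  fixes k :: "'n \<Rightarrow> nat"
  assumes pole: "0 \<le> int (k j) - p" "int (k j) - p < int (k i)"
begin

lemma exchange_at_pole:
  "int (exchange k i) = int (k j) - p" "int (exchange k j) = int (k i) + p"
  "exchange k i < k i" "k j < exchange k j" "exchange k = k(i := exchange k i, j := exchange k j)"
  using pole ij by (auto simp: exchange_def)

definition exchange_numerator :: "'n point \<Rightarrow> complex" where
  "exchange_numerator z =
     Xk_off T Q k i j (fst z) (snd z) *
       (pair_num T Q (k i) (k j) (u_ratio z) / pair_den_left Q (k i) (k j) (u_ratio z) (exchange k i)) -
     Xk_off T Q (exchange k) i j (fst z) (snd z) *
       (pair_num T Q (exchange k i) (exchange k j) (u_ratio z) /
        pair_den_right Q (exchange k i) (exchange k j) (u_ratio z) (k j))"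

lemma Xk_exchange_sum_eq:
  assumes "fst z $ i \<noteq> 0" and "fst z $ j \<noteq> 0"
  shows "Xk T Q k (fst z) (snd z) + Xk T Q (exchange k) (fst z) (snd z) =
    exchange_numerator z / (hyp_eqn z * hyp_cofactor z)"
  unfolding skew_u_ratio[OF assms, symmetric] exchange_numerator_def u_ratio_def
  by (subst (1 2) exchange_at_pole(5))
    (rule Xk_exchange_sum[OF ij Q exchange_at_pole(1-4)])

lemma diff_factors_exchange_numerator: "diff_factors onto_hyp hyp_eqn c exchange_numerator"
  unfolding exchange_numerator_def fun_eq_iff using exchange_at_pole(1-4)
  by (intro diff_factors_diff df_mult diff_factors_Xk_off diff_factors_pair_left diff_factors_pair_right) auto

lemma exchange_numerator_onto_hyp: "\<forall>\<^sub>F z in nhds c. exchange_numerator (onto_hyp z) = 0"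
  using u_ratio_onto_hyp
proof eventually_elim
  case (elim z)
  have "fst (onto_hyp z) $ i = e * Q powi p * fst (onto_hyp z) $ j"
    using ij by (simp add: onto_hyp_def)
  then have "Xk_off T Q (exchange k) i j (fst (onto_hyp z)) (snd (onto_hyp z)) =
      Xk_off T Q k i j (fst (onto_hyp z)) (snd (onto_hyp z))"
    by (subst exchange_at_pole(5)) (rule Xk_off_exchange[OF ij Q e _ exchange_at_pole(1,2)])
  moreover have "int (k j) - int (k i) < p" "p \<le> int (k j)" using pole by auto
  note pair_den_exchange[OF Q e this exchange_at_pole(1,2)]
  ultimately show ?case
    unfolding exchange_numerator_def elim pair_num_exchange[OF Q e exchange_at_pole(1,2)]
    by simp
qed

lemma tendsto_Xk_exchange_sum:
  "\<exists>l. ((\<lambda>z. Xk T Q k (fst z) (snd z) + Xk T Q (exchange k) (fst z) (snd z)) \<longlongrightarrow> l) (at c within generic_pt Q)"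
proof -
  obtain l where "((\<lambda>z. exchange_numerator z / (hyp_eqn z * hyp_cofactor z)) \<longlongrightarrow> l) (at c within generic_pt Q)"
    using diff_factors_tendsto_quotient[OF diff_factors_exchange_numerator exchange_numerator_onto_hyp
        isCont_hyp_cofactor hyp_cofactor_c] hyp_eqn_generic_pt by blast
  moreover have "\<forall>\<^sub>F z in at c within generic_pt Q. exchange_numerator z / (hyp_eqn z * hyp_cofactor z) =
      Xk T Q k (fst z) (snd z) + Xk T Q (exchange k) (fst z) (snd z)"
    unfolding eventually_at_filter
  proof (intro always_eventually allI impI)
    fix z :: "'n point"
    assume "z \<in> generic_pt Q"
    then have "fst z $ i \<noteq> 0" and "fst z $ j \<noteq> 0" by (auto simp: generic_pt_def)
    then show "exchange_numerator z / (hyp_eqn z * hyp_cofactor z) =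
        Xk T Q k (fst z) (snd z) + Xk T Q (exchange k) (fst z) (snd z)"
      by (simp add: Xk_exchange_sum_eq)
  qed
  ultimately show ?thesis by (blast intro: Lim_transform_eventually)
qed

end

lemma exchange_poles:
  assumes "k \<in> poles"
  shows "exchange k \<in> poles" and "exchange (exchange k) = k" and "sum (exchange k) UNIV = sum k UNIV"
proof -
  have nonneg: "0 \<le> int (k j) - p" "0 \<le> int (k i) + p" using assms by (auto simp: poles_def)
  have exchange_ij: "exchange k i = nat (int (k j) - p)" "exchange k j = nat (int (k i) + p)"
    and exchange_other: "\<And>m. m \<noteq> i \<Longrightarrow> m \<noteq> j \<Longrightarrow> exchange k m = k m"
    using ij by (auto simp: exchange_def)
  show "exchange k \<in> poles" using assms nonneg by (auto simp: poles_def exchange_ij)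
  show "exchange (exchange k) = k"
    using ij nonneg by (auto simp: exchange_def)
  have "sum (exchange k) (UNIV - {i, j}) = sum k (UNIV - {i, j})"
    by (rule sum.cong) (auto simp: exchange_other)
  then show "sum (exchange k) UNIV = sum k UNIV"
    using nonneg ij by (simp add: sum_remove2[of UNIV i j] exchange_ij)
qed

theorem tendsto_Lsum: "\<exists>l. ((\<lambda>z. Lsum T Q K (fst z) (snd z)) \<longlongrightarrow> l) (at c within generic_pt Q)"
  unfolding Lsum_def
proof (rule tendsto_sum_involution[where P = "{k. sum k UNIV = K} \<inter> poles" and \<sigma> = exchange])
  show "finite {k :: 'n \<Rightarrow> nat. sum k UNIV = K}" by (rule finite_weak_compositions)
  show "exchange k \<in> {k. sum k UNIV = K} \<inter> poles \<and> exchange (exchange k) = k"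
    if "k \<in> {k. sum k UNIV = K} \<inter> poles" for k
    using exchange_poles that by auto
  show "\<exists>l. ((\<lambda>z. Xk T Q k (fst z) (snd z)) \<longlongrightarrow> l) (at c within generic_pt Q)"
    if "k \<in> {k. sum k UNIV = K} - {k. sum k UNIV = K} \<inter> poles" for k
  proof -
    have "isCont (\<lambda>z. Xk T Q k (fst z) (snd z)) c" using that by (intro isCont_Xk_nonpole) auto
    then show ?thesis unfolding isCont_def by (blast intro: tendsto_within_subset[OF _ subset_UNIV])
  qed
  show "\<exists>l. ((\<lambda>z. Xk T Q k (fst z) (snd z) + Xk T Q (exchange k) (fst z) (snd z)) \<longlongrightarrow> l)
      (at c within generic_pt Q)" if "k \<in> {k. sum k UNIV = K} \<inter> poles" for k
  proof (cases "0 \<le> int (k j) - p \<and> int (k j) - p < int (k i)")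
    case True
    then show ?thesis using tendsto_Xk_exchange_sum by blast
  next
    case False
    then have "0 \<le> int (exchange k j) - p" "int (exchange k j) - p < int (exchange k i)"
      using that ij by (auto simp: poles_def exchange_def)
    moreover have "exchange (exchange k) = k" using that exchange_poles(2) by blast
    ultimately show ?thesis using tendsto_Xk_exchange_sum[of "exchange k"] by (simp add: add.commute)
  qed
qed auto

end

lemma uu_pole_point_generic_on_uu:
  assumes "T \<noteq> 0" and Q: "Q \<noteq> 0" and "\<forall>m::nat. m > 0 \<longrightarrow> (Q ^ 2) ^ m \<noteq> 1" and "i \<noteq> j"
    and c: "c \<in> generic_on_uu Q i j p"
  shows "\<exists>e. uu_pole_point T Q i j e p c"
proof -
  obtain U V where cUV: "c = (U, V)" by fastforce
  have U: "\<forall>m. U$m \<noteq> 0" and hyp: "(U$i) ^ 2 = (Q ^ 2) powi p * (U$j) ^ 2"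
    using c unfolding cUV generic_on_uu_def by auto
  define e where "e = U$i / (Q powi p * U$j)"
  have on_hyp: "U$i = e * Q powi p * U$j" using U Q by (simp add: e_def)
  have "e ^ 2 * ((Q powi p) ^ 2 * (U$j) ^ 2) = 1 * ((Q powi p) ^ 2 * (U$j) ^ 2)"
    using hyp unfolding on_hyp by (auto simp: power_mult_distrib power_int_mult_distrib power2_eq_square)
  moreover have "(Q powi p) ^ 2 * (U$j) ^ 2 \<noteq> 0" using U Q by simp
  ultimately have "e ^ 2 = 1" by (simp only: mult_cancel_right) simp
  then have "e \<in> {1, -1}" by (simp add: power2_eq_1_iff)
  then have "uu_pole_point T Q i j e p c"
    using assms c on_hyp unfolding cUV generic_on_uu_def by unfold_locales auto
  then show ?thesis by blast
qed

lemma tendsto_Lsum_generic_on_uu: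
  assumes "T \<noteq> 0" and "Q \<noteq> 0" and "\<forall>m::nat. m > 0 \<longrightarrow> (Q ^ 2) ^ m \<noteq> 1" and "i \<noteq> j"
    and "c \<in> generic_on_uu Q i j p"
  shows "\<exists>l. ((\<lambda>z. Lsum T Q K (fst z) (snd z)) \<longlongrightarrow> l) (at c within generic_pt Q)"
  using uu_pole_point_generic_on_uu[OF assms] uu_pole_point.tendsto_Lsum by blast

section \<open>Duality and the theorem\<close>

lemma isCont_Lsum:
  fixes c :: "'n::finite point"
  assumes "T \<noteq> 0" and "Q \<noteq> 0" and "\<forall>m. fst c $ m \<noteq> 0" and "\<forall>a. snd c $ a \<noteq> 0"
    and "\<And>m m' s. m \<noteq> m' \<Longrightarrow> (fst c $ m) ^ 2 \<noteq> (Q ^ 2) powi s * (fst c $ m') ^ 2"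
    and "\<And>m a s. (fst c $ m) ^ 2 \<noteq> (Q ^ 2) powi s * (snd c $ a) ^ 2"
  shows "isCont (\<lambda>z. Lsum T Q K (fst z) (snd z)) c"
  unfolding Lsum_def using assms
  by (intro continuous_intros isCont_Xk qbr_ne_0_generic qbr_ratio_ne_0_generic) auto

lemma tendsto_Lsum_generic_on_vv:
  assumes "T \<noteq> 0" and "Q \<noteq> 0" and "c \<in> generic_on_vv Q a b p"
  shows "\<exists>l. ((\<lambda>z. Lsum T Q K (fst z) (snd z)) \<longlongrightarrow> l) (at c within generic_pt Q)"
proof -
  have "isCont (\<lambda>z. Lsum T Q K (fst z) (snd z)) c"
    using assms by (intro isCont_Lsum) (auto simp: generic_on_vv_def)
  then show ?thesis unfolding isCont_def by (blast intro: tendsto_within_subset[OF _ subset_UNIV])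
qed

definition inv_vec :: "complex^'n::finite \<Rightarrow> complex^'n" where
  "inv_vec W = (\<chi> m. inverse (W $ m))"

definition dual_point :: "'n::finite point \<Rightarrow> 'n point" where
  "dual_point z = (inv_vec (snd z), inv_vec (fst z))"

lemma inv_vec_nth [simp]: "inv_vec W $ m = inverse (W $ m)"
  by (simp add: inv_vec_def)

lemma dual_point_dual_point [simp]: "dual_point (dual_point z) = z"
  by (simp add: dual_point_def inv_vec_def vec_eq_iff)

lemma prod_offdiag_swap:
  fixes g :: "'n::finite \<Rightarrow> 'n \<Rightarrow> 'a::comm_monoid_mult"
  shows "(\<Prod>x\<in>UNIV. \<Prod>y\<in>UNIV - {x}. g x y) = (\<Prod>y\<in>UNIV. \<Prod>x\<in>UNIV - {y}. g x y)"
proof -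
  have "(\<Prod>x\<in>UNIV. \<Prod>y\<in>UNIV - {x}. g x y) = (\<Prod>x\<in>UNIV. \<Prod>y\<in>{y\<in>UNIV. x \<noteq> y}. g x y)"
    by (intro prod.cong) auto
  also have "\<dots> = (\<Prod>y\<in>UNIV. \<Prod>x\<in>{x\<in>UNIV. x \<noteq> y}. g x y)"
    by (rule prod.swap_restrict) auto
  also have "\<dots> = (\<Prod>y\<in>UNIV. \<Prod>x\<in>UNIV - {y}. g x y)"
    by (intro prod.cong) auto
  finally show ?thesis .
qed

lemma Yk_eq_Xk_inverse: "Yk T Q k U V = Xk T Q k (inv_vec V) (inv_vec U)"
proof -
  have "(\<Prod>a\<in>UNIV. \<Prod>b\<in>UNIV - {a}.
        qbr (inverse T * inverse (Q ^ k a) * V$a / V$b) Q (k b) / qbr (inverse (Q ^ k a) * V$a / V$b) Q (k b)) =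
      (\<Prod>i\<in>UNIV. \<Prod>j\<in>UNIV - {i}.
        qbr (inverse T * inverse (Q ^ k j) * inv_vec V$i / inv_vec V$j) Q (k i) /
        qbr (inverse (Q ^ k j) * inv_vec V$i / inv_vec V$j) Q (k i))"
    by (subst prod_offdiag_swap) (simp add: divide_inverse ac_simps)
  moreover have "(\<Prod>a\<in>UNIV. \<Prod>j\<in>UNIV. qbr (T * U$j / V$a) Q (k a) / qbr (U$j / V$a) Q (k a)) =
      (\<Prod>a\<in>UNIV. \<Prod>j\<in>UNIV. qbr (T * inv_vec V$j / inv_vec U$a) Q (k j) / qbr (inv_vec V$j / inv_vec U$a) Q (k j))"
    by (subst prod.swap) (simp add: divide_inverse ac_simps)
  ultimately show ?thesis unfolding Yk_def Xk_def by simp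
qed

lemma Rsum_dual_point: "Rsum T Q K (fst z) (snd z) = Lsum T Q K (fst (dual_point z)) (snd (dual_point z))"
  by (simp add: Rsum_def Lsum_def Yk_eq_Xk_inverse dual_point_def)

lemma inverse_square_eq_iff:
  fixes A B X :: complex
  assumes "A \<noteq> 0" and "B \<noteq> 0"
  shows "(inverse A) ^ 2 = X * (inverse B) ^ 2 \<longleftrightarrow> B ^ 2 = X * A ^ 2"
  using assms by (auto simp: field_simps power2_eq_square)

lemma dual_point_generic_pt: "z \<in> generic_pt Q \<Longrightarrow> dual_point z \<in> generic_pt Q"
  by (auto simp: generic_pt_def dual_point_def inverse_square_eq_iff)

lemma dual_point_generic_on_vv:
  assumes Q: "Q \<noteq> 0" and c: "c \<in> generic_on_vv Q a b p"
  shows "dual_point c \<in> generic_on_uu Q a b (- p)"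
proof -
  obtain U V where cUV: "c = (U, V)" by fastforce
  have V: "\<forall>a. V$a \<noteq> 0" and hyp: "(V$a) ^ 2 = (Q ^ 2) powi p * (V$b) ^ 2"
    and VV: "\<forall>a' b' s. a' \<noteq> b' \<and> {a', b'} \<noteq> {a, b} \<longrightarrow> (V$a') ^ 2 \<noteq> (Q ^ 2) powi s * (V$b') ^ 2"
    using c unfolding cUV generic_on_vv_def by auto
  have "(V$b) ^ 2 = (Q ^ 2) powi (- p) * (V$a) ^ 2"
    using Q unfolding hyp by (simp add: power_int_minus)
  then have "(inverse (V$a)) ^ 2 = (Q ^ 2) powi (- p) * (inverse (V$b)) ^ 2"
    using V by (simp add: inverse_square_eq_iff)
  moreover have "(inverse (V$a')) ^ 2 \<noteq> (Q ^ 2) powi s * (inverse (V$b')) ^ 2"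
    if "a' \<noteq> b'" and "{a', b'} \<noteq> {a, b}" for a' b' s
    using VV[rule_format, of b' a' s] V that by (auto simp: inverse_square_eq_iff insert_commute)
  ultimately show ?thesis
    using c unfolding cUV dual_point_def generic_on_uu_def generic_on_vv_def
    by (auto simp: inverse_square_eq_iff)
qed

lemma isCont_dual_point:
  assumes "\<forall>m. fst c $ m \<noteq> 0" and "\<forall>a. snd c $ a \<noteq> 0"
  shows "isCont dual_point c"
  unfolding isCont_def dual_point_def inv_vec_def
  using assms by (auto intro!: tendsto_intros)

lemma tendsto_Rsum_generic_on_vv:
  assumes "T \<noteq> 0" and Q: "Q \<noteq> 0" and "\<forall>m::nat. m > 0 \<longrightarrow> (Q ^ 2) ^ m \<noteq> 1" and "a \<noteq> b"
    and c: "c \<in> generic_on_vv Q a b p"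
  shows "\<exists>l. ((\<lambda>z. Rsum T Q K (fst z) (snd z)) \<longlongrightarrow> l) (at c within generic_pt Q)"
proof -
  obtain l where "((\<lambda>z. Lsum T Q K (fst z) (snd z)) \<longlongrightarrow> l) (at (dual_point c) within generic_pt Q)"
    using tendsto_Lsum_generic_on_uu[OF assms(1-4) dual_point_generic_on_vv[OF Q c]] by blast
  moreover have "filterlim dual_point (at (dual_point c) within generic_pt Q) (at c within generic_pt Q)"
    unfolding filterlim_at
  proof
    show "\<forall>\<^sub>F z in at c within generic_pt Q. dual_point z \<in> generic_pt Q \<and> dual_point z \<noteq> dual_point c"
      unfolding eventually_at_filter
      by (rule always_eventually) (metis dual_point_dual_point dual_point_generic_pt)
    have "isCont dual_point c" using c by (intro isCont_dual_point) (auto simp: generic_on_vv_def)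
    then show "(dual_point \<longlongrightarrow> dual_point c) (at c within generic_pt Q)"
      unfolding isCont_def by (rule tendsto_within_subset[OF _ subset_UNIV])
  qed
  ultimately have "((\<lambda>z. Lsum T Q K (fst (dual_point z)) (snd (dual_point z))) \<longlongrightarrow> l) (at c within generic_pt Q)"
    by (rule filterlim_compose)
  then show ?thesis unfolding Rsum_dual_point by blast
qed

lemma tendsto_Rsum_generic_on_uu:
  assumes "T \<noteq> 0" and "Q \<noteq> 0" and c: "c \<in> generic_on_uu Q i j p"
  shows "\<exists>l. ((\<lambda>z. Rsum T Q K (fst z) (snd z)) \<longlongrightarrow> l) (at c within generic_pt Q)"
proof -
  obtain U V where cUV: "c = (U, V)" by fastforce
  have U: "\<forall>m. U$m \<noteq> 0" and V: "\<forall>a. V$a \<noteq> 0"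
    and VV: "\<forall>a b s. a \<noteq> b \<longrightarrow> (V$a) ^ 2 \<noteq> (Q ^ 2) powi s * (V$b) ^ 2"
    and UV: "\<forall>m a s. (U$m) ^ 2 \<noteq> (Q ^ 2) powi s * (V$a) ^ 2"
    using c unfolding cUV generic_on_uu_def by auto
  have "isCont (\<lambda>z. Lsum T Q K (fst z) (snd z)) (dual_point c)"
  proof (rule isCont_Lsum[OF assms(1,2)])
    show "(fst (dual_point c) $ m) ^ 2 \<noteq> (Q ^ 2) powi s * (fst (dual_point c) $ m') ^ 2"
      if "m \<noteq> m'" for m m' s
    proof -
      have "(V$m') ^ 2 \<noteq> (Q ^ 2) powi s * (V$m) ^ 2" using VV that by auto
      then show ?thesis using V by (simp add: cUV dual_point_def inverse_square_eq_iff)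
    qed
    show "(fst (dual_point c) $ m) ^ 2 \<noteq> (Q ^ 2) powi s * (snd (dual_point c) $ a) ^ 2" for m a s
    proof -
      have "(U$a) ^ 2 \<noteq> (Q ^ 2) powi s * (V$m) ^ 2" using UV by auto
      then show ?thesis using U V by (simp add: cUV dual_point_def inverse_square_eq_iff)
    qed
  qed (use U V in \<open>auto simp: cUV dual_point_def\<close>)
  moreover have "isCont dual_point c" using U V by (intro isCont_dual_point) (auto simp: cUV)
  ultimately have "isCont (\<lambda>z. Rsum T Q K (fst z) (snd z)) c"
    unfolding Rsum_dual_point using isCont_o2 by blast
  then show ?thesis unfolding isCont_def by (blast intro: tendsto_within_subset[OF _ subset_UNIV])
qed

theorem corollary1:
  fixes T Q :: complex and K :: nat
  assumes "T \<noteq> 0" and "Q \<noteq> 0"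
    and "\<forall>m::nat. m > 0 \<longrightarrow> (Q^2)^m \<noteq> 1"
  shows "(\<forall>(i::'n::finite) j (p::int). i \<noteq> j \<longrightarrow>
            (\<forall>c \<in> generic_on_uu Q i j p.
               (\<exists>l. ((\<lambda>(U, V). Lsum T Q K U V) \<longlongrightarrow> l) (at c within generic_pt Q)) \<and>
               (\<exists>l. ((\<lambda>(U, V). Rsum T Q K U V) \<longlongrightarrow> l) (at c within generic_pt Q))))
       \<and> (\<forall>(a::'n) b (p::int). a \<noteq> b \<longrightarrow>
            (\<forall>c \<in> generic_on_vv Q a b p.
               (\<exists>l. ((\<lambda>(U, V). Lsum T Q K U V) \<longlongrightarrow> l) (at c within generic_pt Q)) \<and>
               (\<exists>l. ((\<lambda>(U, V). Rsum T Q K U V) \<longlongrightarrow> l) (at c within generic_pt Q))))"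
  unfolding case_prod_beta'
proof (intro conjI allI impI ballI)
  fix i j :: 'n and p :: int and c
  assume ij: "i \<noteq> j" and c: "c \<in> generic_on_uu Q i j p"
  show "\<exists>l. ((\<lambda>z. Lsum T Q K (fst z) (snd z)) \<longlongrightarrow> l) (at c within generic_pt Q)"
    by (rule tendsto_Lsum_generic_on_uu[OF assms ij c])
  show "\<exists>l. ((\<lambda>z. Rsum T Q K (fst z) (snd z)) \<longlongrightarrow> l) (at c within generic_pt Q)"
    by (rule tendsto_Rsum_generic_on_uu[OF assms(1,2) c])
next
  fix a b :: 'n and p :: int and c
  assume ab: "a \<noteq> b" and c: "c \<in> generic_on_vv Q a b p"
  show "\<exists>l. ((\<lambda>z. Lsum T Q K (fst z) (snd z)) \<longlongrightarrow> l) (at c within generic_pt Q)"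
    by (rule tendsto_Lsum_generic_on_vv[OF assms(1,2) c])
  show "\<exists>l. ((\<lambda>z. Rsum T Q K (fst z) (snd z)) \<longlongrightarrow> l) (at c within generic_pt Q)"
    by (rule tendsto_Rsum_generic_on_vv[OF assms ab c])
qed

end
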